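(* Let $n\ge2$, $1\le k\le n$, $r:=n-k$. Let $\mathbb X=(X_\alpha)_{\alpha\in I}$ be the rook coincidence process (defined in the context) and let $\mathbb Y=(Y_\alpha)_{\alpha\in I}$ be a family of independent Poisson random variables with $\mathbb E Y_\alpha=\mathbb E X_\alpha$ for all $\alpha\in I$. Define $$d:=r(r-1)\Big(r-\tfrac32\Big)\frac{362}{9n^2}\cdot\frac{n\big(n-\frac{301}{181}\big)+166}{(n-1)^2}.$$ Then $d_{TV}(\mathcal L(\mathbb X),\mathcal L(\mathbb Y))\le d$. Furthermore, for $s\in\{\mathrm{RR},\mathrm{CC},\mathrm{RC},\mathrm{CR}\}$ let $W_s:=\sum_{\alpha\in I_s}X_\alpha$ and let $S_{\mathrm{RR}},S_{\mathrm{CC}},S_{\mathrm{RC}},S_{\mathrm{CR}}$ be independent Poisson random variables with $\mathbb E S_s=\mathbb E W_s$. Then $$d_{TV}\big(\mathcal L(W_{\mathrm{RR}},W_{\mathrm{CC}},W_{\mathrm{RC}},W_{\mathrm{CR}}),\ \mathcal L(S_{\mathrm{RR}},S_{\mathrm{CC}},S_{\mathrm{RC}},S_{\mathrm{CR}})\big)\le d.$$ In particular both distances are $O\big((n-k)^3/n^2\big)$.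
   Context: The board is $B_n=\{(i,j):1\le i<j\le n\}$; a square $(i,j)$ has row $i$ and column $j$; $|B_n|=\binom n2$. Place $r$ distinguishable rooks, labelled $1,\dots,r$, independently and each uniformly at random on $B_n$ (several rooks may occupy the same square). The index set is $I=\{(\{a,b\},s):1\le a<b\le r,\ s\in\{\mathrm{RR},\mathrm{CC},\mathrm{RC},\mathrm{CR}\}\}$, and $I_s$ is the set of indices with mark $s$. For $\alpha=(\{a,b\},s)$ with $a<b$, $X_\alpha$ is the indicator that: rooks $a,b$ are in the same row ($s=\mathrm{RR}$); rooks $a,b$ are in the same column ($s=\mathrm{CC}$); the column number of rook $a$ equals the row number of rook $b$ ($s=\mathrm{RC}$); the row number of rook $a$ equals the column number of rook $b$ ($s=\mathrm{CR}$). The family $(X_\alpha)_{\alpha\in I}$ is the rook coincidence process. $d_{TV}$ denotes total variation distance between distributions. *)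

theory Defs
  imports "HOL-Probability.Probability"
begin

text \<open>The board B_n = {(i,j). 1 <= i < j <= n}; a square (i,j) has row i and column j.\<close>
definition board :: "nat \<Rightarrow> (nat \<times> nat) set" where
  "board n = {(i, j). 1 \<le> i \<and> i < j \<and> j \<le> n}"

definition rook_config :: "nat \<Rightarrow> nat \<Rightarrow> (nat \<Rightarrow> nat \<times> nat) pmf" where
  "rook_config n r = pmf_of_set (PiE {1..r} (\<lambda>_. board n))"

datatype mark = RR | CC | RC | CR

text \<open>Index set I: an unordered pair {a,b} with a<b is represented by the pair (a,b).\<close>
definition rook_index :: "nat \<Rightarrow> ((nat \<times> nat) \<times> mark) set" where
  "rook_index r = {((a, b), s). 1 \<le> a \<and> a < b \<and> b \<le> r}"

definition rook_index_mark :: "nat \<Rightarrow> mark \<Rightarrow> ((nat \<times> nat) \<times> mark) set" where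
  "rook_index_mark r s = {\<alpha> \<in> rook_index r. snd \<alpha> = s}"

fun coinc :: "(nat \<Rightarrow> nat \<times> nat) \<Rightarrow> (nat \<times> nat) \<times> mark \<Rightarrow> nat" where
  "coinc w ((a, b), RR) = (if fst (w a) = fst (w b) then 1 else 0)"
| "coinc w ((a, b), CC) = (if snd (w a) = snd (w b) then 1 else 0)"
| "coinc w ((a, b), RC) = (if snd (w a) = fst (w b) then 1 else 0)"
| "coinc w ((a, b), CR) = (if fst (w a) = snd (w b) then 1 else 0)"

definition pois :: "real \<Rightarrow> nat pmf" where
  "pois m = (if m \<le> 0 then return_pmf 0 else poisson_pmf m)"

definition dTV :: "'a pmf \<Rightarrow> 'a pmf \<Rightarrow> real" where
  "dTV p q = (SUP A. \<bar>measure_pmf.prob p A - measure_pmf.prob q A\<bar>)"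

definition rook_bound :: "nat \<Rightarrow> nat \<Rightarrow> real" where
  "rook_bound n r = real r * (real r - 1) * (real r - 3/2) * (362 / (9 * (real n)^2))
      * ((real n * (real n - 301/181) + 166) / (real n - 1)^2)"

end

theory Submission
  imports Defs
begin

text \<open>The coincidence indicator of a pair of rooks is independent of all indicators of pairs
  sharing no rook with it. For such locally dependent \<open>0/1\<close> fields we replace the coordinates
  one at a time by independent Poisson variables with the same means. Replacing coordinate \<open>j\<close>
  (mean \<open>\<lambda>\<^sub>j \<le> 1\<close>) perturbs the probability of any event by \<open>u (X\<^sub>j) - E u(Po \<lambda>\<^sub>j)\<close> for some
  \<open>u\<close> with values in \<open>[0, 1]\<close>; by the Poisson Stein equation this equals
  \<open>\<lambda>\<^sub>j g (X\<^sub>j + 1) - X\<^sub>j g (X\<^sub>j)\<close> with \<open>\<bar>g\<bar> \<le> 1\<close>, and the local independence bounds its mean by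
  \<open>2 \<lambda>\<^sub>j\<^sup>2 + 2 \<Sum>\<^sub>\<beta> (\<lambda>\<^sub>j \<lambda>\<^sub>\<beta> + E X\<^sub>j X\<^sub>\<beta>)\<close>, the sum over the already replaced neighbours \<open>\<beta>\<close>.

  On the board every square has \<open>2n - 2\<close> coincidences with the others, so the four marks of a
  pair of rooks have means summing to \<open>4/n\<close>, two adjacent pairs have mixed moments summing to
  \<open>16/n\<^sup>2\<close>, and each of the \<open>r(r-1)/2\<close> pairs has at most \<open>2(r-2)\<close> adjacent pairs: the total is
  \<open>O(r\<^sup>3/n\<^sup>2)\<close>. The mark counts are a function of the field, and sums of independent Poisson
  variables are Poisson, so their distance is no larger.\<close>

section \<open>Expectations under products of pmfs\<close>

lemma integrable_pmf_bounded:
  fixes f :: "'a \<Rightarrow> real"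
  assumes "\<And>x. \<bar>f x\<bar> \<le> C"
  shows "integrable (measure_pmf p) f"
  by (rule measure_pmf.integrable_const_bound[where B=C]) (use assms in auto)

lemma expectation_cong_set_pmf:
  fixes f g :: "'a \<Rightarrow> real"
  shows "(\<And>x. x \<in> set_pmf p \<Longrightarrow> f x = g x) \<Longrightarrow>
    measure_pmf.expectation p f = measure_pmf.expectation p g"
  by (rule integral_cong_AE) (auto simp: AE_measure_pmf_iff)

lemma expectation_pair_pmf_nonneg:
  fixes h :: "'a \<times> 'b \<Rightarrow> real"
  assumes "\<And>x. 0 \<le> h x" "\<And>x. h x \<le> C"
  shows "measure_pmf.expectation (pair_pmf A B) h =
         measure_pmf.expectation A (\<lambda>a. measure_pmf.expectation B (\<lambda>b. h (a, b)))"
proof -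
  have hb: "\<bar>h x\<bar> \<le> C" for x using assms[of x] by simp
  have inner_nonneg: "0 \<le> measure_pmf.expectation B (\<lambda>b. h (a, b))" for a
    by (rule Bochner_Integration.integral_nonneg) (use assms in auto)
  have inner_le: "measure_pmf.expectation B (\<lambda>b. h (a, b)) \<le> C" for a
  proof -
    have "measure_pmf.expectation B (\<lambda>b. h (a, b)) \<le> measure_pmf.expectation B (\<lambda>b. C)"
      by (rule Bochner_Integration.integral_mono) (use hb assms in \<open>auto intro!: integrable_pmf_bounded\<close>)
    then show ?thesis by simp
  qed
  have inner: "(\<integral>\<^sup>+b. ennreal (h (a, b)) \<partial>B) = ennreal (measure_pmf.expectation B (\<lambda>b. h (a, b)))" for a
    by (rule nn_integral_eq_integral) (use hb assms in \<open>auto intro!: integrable_pmf_bounded\<close>)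
  have "measure_pmf.expectation (pair_pmf A B) h = enn2real (\<integral>\<^sup>+x. ennreal (h x) \<partial>pair_pmf A B)"
    by (rule integral_eq_nn_integral) (use hb assms in \<open>auto intro!: integrable_pmf_bounded\<close>)
  also have "(\<integral>\<^sup>+x. ennreal (h x) \<partial>pair_pmf A B) = (\<integral>\<^sup>+a. \<integral>\<^sup>+b. ennreal (h (a, b)) \<partial>B \<partial>A)"
    by (rule nn_integral_pair_pmf')
  also have "\<dots> = (\<integral>\<^sup>+a. ennreal (measure_pmf.expectation B (\<lambda>b. h (a, b))) \<partial>A)"
    by (simp add: inner)
  also have "\<dots> = ennreal (measure_pmf.expectation A (\<lambda>a. measure_pmf.expectation B (\<lambda>b. h (a, b))))"
    by (rule nn_integral_eq_integral)
       (use inner_nonneg inner_le in \<open>auto intro!: integrable_pmf_bounded[where C=C]\<close>)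
  finally show ?thesis
    by (simp add: inner_nonneg Bochner_Integration.integral_nonneg)
qed

lemma expectation_pair_pmf:
  fixes h :: "'a \<times> 'b \<Rightarrow> real"
  assumes "\<And>x. \<bar>h x\<bar> \<le> C"
  shows "measure_pmf.expectation (pair_pmf A B) h =
         measure_pmf.expectation A (\<lambda>a. measure_pmf.expectation B (\<lambda>b. h (a, b)))"
proof -
  define g where "g x = h x + C" for x
  have g: "0 \<le> g x" "g x \<le> 2 * C" "\<bar>g x\<bar> \<le> 2 * C" for x
    using assms[of x] unfolding g_def by (auto simp: abs_le_iff)
  have h: "h = (\<lambda>x. g x - C)" unfolding g_def by auto
  have inner_bound: "\<bar>measure_pmf.expectation B (\<lambda>b. g (a, b))\<bar> \<le> 2 * C" for a
  proof -
    have "measure_pmf.expectation B (\<lambda>b. g (a, b)) \<le> measure_pmf.expectation B (\<lambda>b. 2 * C)"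
      by (rule Bochner_Integration.integral_mono) (use g in \<open>auto intro!: integrable_pmf_bounded\<close>)
    moreover have "0 \<le> measure_pmf.expectation B (\<lambda>b. g (a, b))"
      by (rule Bochner_Integration.integral_nonneg) (use g in auto)
    ultimately show ?thesis by simp
  qed
  have "measure_pmf.expectation (pair_pmf A B) h = measure_pmf.expectation (pair_pmf A B) g - C"
    unfolding h by (subst Bochner_Integration.integral_diff) (use g in \<open>auto intro!: integrable_pmf_bounded\<close>)
  also have "\<dots> = measure_pmf.expectation A (\<lambda>a. measure_pmf.expectation B (\<lambda>b. g (a, b))) - C"
    using expectation_pair_pmf_nonneg[of g "2 * C"] g by simp
  also have "\<dots> = measure_pmf.expectation A (\<lambda>a. measure_pmf.expectation B (\<lambda>b. g (a, b)) - C)"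
    by (subst Bochner_Integration.integral_diff) (use inner_bound in \<open>auto intro!: integrable_pmf_bounded\<close>)
  also have "\<dots> = measure_pmf.expectation A (\<lambda>a. measure_pmf.expectation B (\<lambda>b. h (a, b)))"
    unfolding h
    by (intro Bochner_Integration.integral_cong refl, subst Bochner_Integration.integral_diff)
       (use g in \<open>auto intro!: integrable_pmf_bounded\<close>)
  finally show ?thesis .
qed

lemma expectation_pair_pmf_swap:
  fixes h :: "'a \<times> 'b \<Rightarrow> real"
  assumes "\<And>x. \<bar>h x\<bar> \<le> C"
  shows "measure_pmf.expectation (pair_pmf A B) h =
         measure_pmf.expectation B (\<lambda>b. measure_pmf.expectation A (\<lambda>a. h (a, b)))"
proof -
  have "measure_pmf.expectation (pair_pmf A B) h =
        measure_pmf.expectation (pair_pmf B A) (\<lambda>p. h (snd p, fst p))"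
    by (subst pair_commute_pmf) (simp add: case_prod_unfold)
  also have "\<dots> = measure_pmf.expectation B (\<lambda>b. measure_pmf.expectation A (\<lambda>a. h (a, b)))"
    by (rule expectation_pair_pmf[where C=C and h="\<lambda>p. h (snd p, fst p)", simplified])
       (use assms in auto)
  finally show ?thesis .
qed

lemma expectation_Pi_pmf_remove:
  fixes h :: "('a \<Rightarrow> 'b) \<Rightarrow> real"
  assumes "finite K" "c \<in> K" "\<And>x. \<bar>h x\<bar> \<le> C"
  shows "measure_pmf.expectation (Pi_pmf K d p) h =
         measure_pmf.expectation (Pi_pmf (K - {c}) d p)
           (\<lambda>f. measure_pmf.expectation (p c) (\<lambda>v. h (f(c := v))))"
proof -
  have K: "K = insert c (K - {c})" using assms by auto
  have "measure_pmf.expectation (Pi_pmf K d p) h =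
        measure_pmf.expectation (pair_pmf (p c) (Pi_pmf (K - {c}) d p)) (\<lambda>q. h ((snd q)(c := fst q)))"
    by (subst K, subst Pi_pmf_insert) (use assms in \<open>auto simp: case_prod_unfold\<close>)
  also have "\<dots> = measure_pmf.expectation (Pi_pmf (K - {c}) d p)
                    (\<lambda>f. measure_pmf.expectation (p c) (\<lambda>v. h (f(c := v))))"
    by (rule expectation_pair_pmf_swap[where C=C and h="\<lambda>q. h ((snd q)(c := fst q))", simplified])
       (use assms in auto)
  finally show ?thesis .
qed

lemma expectation_Pi_pmf_mult_indep:
  fixes \<phi> \<psi> :: "('a \<Rightarrow> 'b) \<Rightarrow> real"
  assumes K: "finite K" "S \<subseteq> K"
    and \<phi>: "\<And>w w'. (\<And>x. x \<in> S \<Longrightarrow> w x = w' x) \<Longrightarrow> \<phi> w = \<phi> w'"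
    and \<psi>: "\<And>w w'. (\<And>x. x \<in> K - S \<Longrightarrow> w x = w' x) \<Longrightarrow> \<psi> w = \<psi> w'"
    and bounded: "\<And>w. \<bar>\<phi> w\<bar> \<le> C\<^sub>\<phi>" "\<And>w. \<bar>\<psi> w\<bar> \<le> C\<^sub>\<psi>"
  shows "measure_pmf.expectation (Pi_pmf K d p) (\<lambda>w. \<phi> w * \<psi> w) =
         measure_pmf.expectation (Pi_pmf K d p) \<phi> * measure_pmf.expectation (Pi_pmf K d p) \<psi>"
proof -
  let ?M = "\<lambda>(f, g) x. if x \<in> S then f x else g x"
  let ?Q = "pair_pmf (Pi_pmf S d p) (Pi_pmf (K - S) d p)"
  have "Pi_pmf K d p = Pi_pmf (S \<union> (K - S)) d p" using K by (simp add: Un_absorb1)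
  also have "\<dots> = map_pmf ?M ?Q" by (rule Pi_pmf_union) (use K finite_subset in auto)
  finally have KS: "Pi_pmf K d p = map_pmf ?M ?Q" .
  have \<phi>M: "\<phi> (?M q) = \<phi> (fst q)" for q by (rule \<phi>) (auto simp: case_prod_unfold)
  have \<psi>M: "\<psi> (?M q) = \<psi> (snd q)" for q by (rule \<psi>) (auto simp: case_prod_unfold)
  have C\<^sub>\<phi>: "0 \<le> C\<^sub>\<phi>" using bounded(1)[of undefined] by simp
  have "measure_pmf.expectation (Pi_pmf K d p) (\<lambda>w. \<phi> w * \<psi> w) =
        measure_pmf.expectation ?Q (\<lambda>q. \<phi> (fst q) * \<psi> (snd q))"
    unfolding KS by (simp only: integral_map_pmf \<phi>M \<psi>M)
  also have "\<dots> = measure_pmf.expectation (Pi_pmf S d p)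
                    (\<lambda>f. measure_pmf.expectation (Pi_pmf (K - S) d p) (\<lambda>g. \<phi> f * \<psi> g))"
  proof (rule expectation_pair_pmf[where C="C\<^sub>\<phi> * C\<^sub>\<psi>" and h="\<lambda>q. \<phi> (fst q) * \<psi> (snd q)",
           simplified fst_conv snd_conv])
    show "\<bar>\<phi> (fst q) * \<psi> (snd q)\<bar> \<le> C\<^sub>\<phi> * C\<^sub>\<psi>" for q
      unfolding abs_mult using bounded C\<^sub>\<phi> by (intro mult_mono) auto
  qed
  also have "\<dots> = measure_pmf.expectation (Pi_pmf S d p) \<phi> * measure_pmf.expectation (Pi_pmf (K - S) d p) \<psi>"
    by (simp only: integral_mult_right_zero integral_mult_left_zero)
  also have "\<dots> = measure_pmf.expectation (Pi_pmf K d p) \<phi> * measure_pmf.expectation (Pi_pmf K d p) \<psi>"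
    unfolding KS by (simp only: integral_map_pmf \<phi>M \<psi>M expectation_pair_pmf_fst expectation_pair_pmf_snd)
  finally show ?thesis .
qed

section \<open>The Poisson distribution\<close>

lemma poisson_expectation_head:
  fixes u :: "nat \<Rightarrow> real"
  assumes m: "0 < m" and u: "\<And>v. 0 \<le> u v" "\<And>v. u v \<le> 1"
  obtains R where "measure_pmf.expectation (poisson_pmf m) u = exp (-m) * u 0 + m * exp (-m) * u 1 + R"
    and "0 \<le> R" and "R \<le> 1 - exp (-m) - m * exp (-m)"
proof -
  let ?E = "measure_pmf.expectation (poisson_pmf m)"
  let ?tail = "\<lambda>g v. if 2 \<le> v then g v else 0 :: real"
  have split: "?E g = exp (-m) * g 0 + m * exp (-m) * g 1 + ?E (?tail g)"
    if g: "\<And>v. \<bar>g v\<bar> \<le> 1" for g :: "nat \<Rightarrow> real"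
  proof -
    have int: "integrable (poisson_pmf m) (\<lambda>v. indicator {0} v * g 0 :: real)"
      "integrable (poisson_pmf m) (\<lambda>v. indicator {1} v * g 1 :: real)"
      "integrable (poisson_pmf m) (?tail g)"
      by (auto intro!: integrable_pmf_bounded[where C=1] simp: indicator_def g)
    have "g = (\<lambda>v. (indicator {0} v * g 0 + indicator {1} v * g 1) + ?tail g v)"
      by (auto simp: fun_eq_iff indicator_def) (metis less_2_cases not_le)
    then have "?E g = ?E (\<lambda>v. indicator {0} v * g 0 + indicator {1} v * g 1) + ?E (?tail g)"
      using Bochner_Integration.integral_add[OF Bochner_Integration.integrable_add[OF int(1,2)] int(3)]
      by metis
    also have "?E (\<lambda>v. indicator {0} v * g 0 + indicator {1} v * g 1) =
        ?E (\<lambda>v. indicator {0} v * g 0) + ?E (\<lambda>v. indicator {1} v * g 1)"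
      by (rule Bochner_Integration.integral_add[OF int(1,2)])
    finally have "?E g = ?E (\<lambda>v. indicator {0} v * g 0) + ?E (\<lambda>v. indicator {1} v * g 1) + ?E (?tail g)" .
    then show ?thesis using m by (simp add: measure_pmf_single)
  qed
  have u_abs: "\<bar>u v\<bar> \<le> 1" for v using u[of v] by simp
  show ?thesis
  proof
    show "?E u = exp (-m) * u 0 + m * exp (-m) * u 1 + ?E (?tail u)"
      by (rule split) (rule u_abs)
    show "0 \<le> ?E (?tail u)" by (rule Bochner_Integration.integral_nonneg) (use u in auto)
    have "?E (?tail u) \<le> ?E (?tail (\<lambda>_. 1))"
      by (rule Bochner_Integration.integral_mono)
         (use u u_abs in \<open>auto intro!: integrable_pmf_bounded[where C=1]\<close>)
    also have "?E (?tail (\<lambda>_. 1)) = 1 - exp (-m) - m * exp (-m)"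
      using split[of "\<lambda>_. 1"] by simp
    finally show "?E (?tail u) \<le> 1 - exp (-m) - m * exp (-m)" .
  qed
qed

lemma poisson_stein_bound_0:
  fixes u :: "nat \<Rightarrow> real"
  assumes m: "0 < m" "m \<le> 1" and u: "\<And>v. 0 \<le> u v" "\<And>v. u v \<le> 1"
  shows "\<bar>u 0 - measure_pmf.expectation (poisson_pmf m) u\<bar> \<le> m"
proof -
  obtain R where U: "measure_pmf.expectation (poisson_pmf m) u = exp (-m) * u 0 + m * exp (-m) * u 1 + R"
    and R: "0 \<le> R" "R \<le> 1 - exp (-m) - m * exp (-m)"
    using poisson_expectation_head[OF m(1) u] .
  have e: "1 - m \<le> exp (-m)" "exp (-m) \<le> 1" using exp_ge_add_one_self[of "-m"] m by auto
  have "0 \<le> u 0 * (1 - exp (-m))" "u 0 * (1 - exp (-m)) \<le> 1 - exp (-m)"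
    using u[of 0] e by (auto intro: mult_left_le_one_le)
  moreover have "0 \<le> m * exp (-m) * u 1" "m * exp (-m) * u 1 \<le> m * exp (-m)"
    using u[of 1] m by (auto intro: mult_left_le)
  ultimately show ?thesis unfolding U using R e by (simp add: abs_le_iff algebra_simps)
qed

lemma poisson_stein_bound_1:
  fixes u :: "nat \<Rightarrow> real"
  assumes m: "0 < m" "m \<le> 1" and u: "\<And>v. 0 \<le> u v" "\<And>v. u v \<le> 1"
  defines "U \<equiv> measure_pmf.expectation (poisson_pmf m) u"
  shows "\<bar>m * (u 1 - U) + (u 0 - U)\<bar> \<le> m^2"
proof -
  obtain R where U: "U = exp (-m) * u 0 + m * exp (-m) * u 1 + R"
    and R: "0 \<le> R" "R \<le> 1 - exp (-m) - m * exp (-m)"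
    using poisson_expectation_head[OF m(1) u] unfolding U_def .
  define S where "S = exp (-m) * (u 0 + m * u 1)"
  define q where "q = exp (-m) * (1 + m)"
  have em: "exp m * exp (-m) = 1" by (simp add: exp_minus)
  have S: "0 \<le> S" "S \<le> q"
    unfolding S_def q_def using u[of 0] u[of 1] m by (auto intro!: mult_left_mono add_mono)
  have q: "0 \<le> q" "R \<le> 1 - q" using S R unfolding q_def by (auto simp: algebra_simps)
  have "m * (u 1 - U) + (u 0 - U) = exp m * (S * (1 - q) - q * R)"
    unfolding U S_def q_def using em by algebra
  moreover have "\<bar>S * (1 - q) - q * R\<bar> \<le> 1 - q"
  proof -
    have "S * (1 - q) \<le> 1 - q" "q * R \<le> R"
      using S q R by (auto intro!: mult_left_le_one_le)
    moreover have "0 \<le> S * (1 - q)" "0 \<le> q * R" using S q R by auto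
    ultimately show ?thesis using q by (simp add: abs_le_iff)
  qed
  ultimately have "\<bar>m * (u 1 - U) + (u 0 - U)\<bar> \<le> exp m * (1 - q)"
    using mult_left_mono[of _ "1 - q" "exp m"] by (simp add: abs_mult)
  also have "exp m * (1 - q) = exp m - 1 - m" unfolding q_def using em by algebra
  also have "\<dots> \<le> m^2" using exp_bound[of m] m by simp
  finally show ?thesis .
qed

text \<open>\<open>g1\<close> and \<open>g2\<close> are the values \<open>g 1\<close> and \<open>g 2\<close> of the solution of the Poisson Stein equation
  \<open>m * g (k + 1) - k * g k = u k - U\<close>.\<close>

lemma poisson_stein_solution:
  fixes u :: "nat \<Rightarrow> real"
  assumes m: "0 < m" "m \<le> 1" and u: "\<And>v. 0 \<le> u v" "\<And>v. u v \<le> 1"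
    and U_def: "U = measure_pmf.expectation (poisson_pmf m) u"
    and g1_def: "g1 = (u 0 - U) / m" and g2_def: "g2 = (u 1 - U + g1) / m"
  shows "\<bar>g1\<bar> \<le> 1" and "\<bar>g2\<bar> \<le> 1"
    and "k \<le> 1 \<Longrightarrow> u k - U = m * (if k = 0 then g1 else g2) - real k * g1"
proof -
  show "\<bar>g1\<bar> \<le> 1"
    using poisson_stein_bound_0[OF m u] m by (simp add: g1_def U_def abs_divide)
  have "g2 = (m * (u 1 - U) + (u 0 - U)) / m^2"
    unfolding g2_def g1_def using m by (simp add: field_simps power2_eq_square)
  then show "\<bar>g2\<bar> \<le> 1"
    using poisson_stein_bound_1[OF m u] m by (simp add: U_def abs_divide)
  show "u k - U = m * (if k = 0 then g1 else g2) - real k * g1" if "k \<le> 1"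
    using that m by (cases k) (auto simp: g1_def g2_def field_simps)
qed

lemma poisson_pmf_add:
  assumes a: "0 < a" and b: "0 < b"
  shows "map_pmf (\<lambda>(x, y). x + y) (pair_pmf (poisson_pmf a) (poisson_pmf b)) = poisson_pmf (a + b)"
proof (rule pmf_eqI)
  fix k :: nat
  have pre: "(\<lambda>(x, y). x + y) -` {k} = (\<lambda>i. (i, k - i)) ` {..k}"
    by (auto simp: image_iff)
  have "pmf (map_pmf (\<lambda>(x, y). x + y) (pair_pmf (poisson_pmf a) (poisson_pmf b))) k
        = (\<Sum>i\<le>k. pmf (poisson_pmf a) i * pmf (poisson_pmf b) (k - i))"
    unfolding pmf_map pre
    by (subst measure_measure_pmf_finite, simp, subst sum.reindex) (auto simp: inj_on_def pmf_pair)
  also have "\<dots> = (\<Sum>i\<le>k. real (k choose i) * a ^ i * b ^ (k - i)) / fact k * exp (-(a + b))"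
  proof -
    have "(a ^ i / fact i * exp (-a)) * (b ^ (k - i) / fact (k - i) * exp (-b)) =
          real (k choose i) * a ^ i * b ^ (k - i) / fact k * exp (-(a + b))" if "i \<le> k" for i
      using that by (simp add: binomial_fact exp_add[symmetric] field_simps)
    then show ?thesis using a b by (simp add: sum_divide_distrib sum_distrib_right)
  qed
  also have "\<dots> = pmf (poisson_pmf (a + b)) k"
    using a b by (simp add: binomial_ring)
  finally show "pmf (map_pmf (\<lambda>(x, y). x + y) (pair_pmf (poisson_pmf a) (poisson_pmf b))) k =
      pmf (poisson_pmf (a + b)) k" .
qed

lemma pois_add:
  assumes "0 \<le> a" "0 \<le> b"
  shows "map_pmf (\<lambda>(x, y). x + y) (pair_pmf (pois a) (pois b)) = pois (a + b)"
  using assms poisson_pmf_add[of a b]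
  by (cases "a = 0"; cases "b = 0")
     (simp_all add: pois_def pair_return_pmf1 pair_return_pmf2 map_pmf_comp)

lemma pois_sum:
  assumes "finite J" "\<And>\<alpha>. 0 \<le> m \<alpha>"
  shows "map_pmf (\<lambda>y. \<Sum>\<alpha>\<in>J. y \<alpha>) (Pi_pmf J 0 (\<lambda>\<alpha>. pois (m \<alpha>))) = pois (\<Sum>\<alpha>\<in>J. m \<alpha>)"
  using assms(1)
proof (induction J rule: finite_induct)
  case empty
  then show ?case by (simp add: pois_def)
next
  case (insert j J)
  have sum_upd: "(\<Sum>\<alpha>\<in>insert j J. if \<alpha> = j then v else f \<alpha>) = v + sum f J"
    for f :: "'a \<Rightarrow> nat" and v
  proof -
    have "(\<Sum>\<alpha>\<in>J. if \<alpha> = j then v else f \<alpha>) = sum f J" by (rule sum.cong) (use insert.hyps in auto)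
    then show ?thesis using insert.hyps by simp
  qed
  have "map_pmf (\<lambda>y. \<Sum>\<alpha>\<in>insert j J. y \<alpha>) (Pi_pmf (insert j J) 0 (\<lambda>\<alpha>. pois (m \<alpha>)))
      = map_pmf (\<lambda>(x, y). x + y)
          (pair_pmf (pois (m j)) (map_pmf (\<lambda>y. \<Sum>\<alpha>\<in>J. y \<alpha>) (Pi_pmf J 0 (\<lambda>\<alpha>. pois (m \<alpha>)))))"
    by (subst Pi_pmf_insert[OF insert.hyps])
       (simp add: map_pmf_comp pair_map_pmf2 case_prod_unfold sum_upd)
  also have "\<dots> = pois (\<Sum>\<alpha>\<in>insert j J. m \<alpha>)"
    unfolding insert.IH using insert.hyps
    by (simp add: pois_add assms(2) sum_nonneg)
  finally show ?case .
qed

lemma dTV_map_pmf_le: "dTV (map_pmf f p) (map_pmf f q) \<le> dTV p q"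
  unfolding dTV_def
proof (rule cSUP_least)
  show "UNIV \<noteq> {}" by simp
  fix A
  have bounded: "\<bar>measure_pmf.prob p B - measure_pmf.prob q B\<bar> \<le> 1" for B
    using measure_pmf.prob_le_1[of p B] measure_pmf.prob_le_1[of q B]
      measure_nonneg[of "measure_pmf p" B] measure_nonneg[of "measure_pmf q" B] by linarith
  have "\<bar>measure_pmf.prob (map_pmf f p) A - measure_pmf.prob (map_pmf f q) A\<bar> =
        \<bar>measure_pmf.prob p (f -` A) - measure_pmf.prob q (f -` A)\<bar>" by simp
  also have "\<dots> \<le> (SUP B. \<bar>measure_pmf.prob p B - measure_pmf.prob q B\<bar>)"
    by (rule cSUP_upper) (auto intro!: bdd_aboveI[where M=1] bounded)
  finally show "\<bar>measure_pmf.prob (map_pmf f p) A - measure_pmf.prob (map_pmf f q) A\<bar>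
      \<le> (SUP B. \<bar>measure_pmf.prob p B - measure_pmf.prob q B\<bar>)" .
qed

lemma Pi_pmf_pois_sum_split:
  assumes "finite A" "finite B" "A \<inter> B = {}" "\<And>\<alpha>. 0 \<le> m \<alpha>"
    and \<Psi>: "\<And>y y'. (\<And>x. x \<in> B \<Longrightarrow> y x = y' x) \<Longrightarrow> \<Psi> y = \<Psi> y'"
  shows "map_pmf (\<lambda>y. (\<Sum>\<alpha>\<in>A. y \<alpha>, \<Psi> y)) (Pi_pmf (A \<union> B) 0 (\<lambda>\<alpha>. pois (m \<alpha>))) =
         pair_pmf (pois (\<Sum>\<alpha>\<in>A. m \<alpha>)) (map_pmf \<Psi> (Pi_pmf B 0 (\<lambda>\<alpha>. pois (m \<alpha>))))"
proof -
  let ?p = "\<lambda>\<alpha>. pois (m \<alpha>)"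
  have "(\<lambda>y. (\<Sum>\<alpha>\<in>A. y \<alpha>, \<Psi> y)) \<circ> (\<lambda>(f, g) x. if x \<in> A then f x else g x) =
        (\<lambda>(f, g). (\<Sum>\<alpha>\<in>A. f \<alpha>, \<Psi> g))"
  proof
    fix q :: "('a \<Rightarrow> nat) \<times> ('a \<Rightarrow> nat)"
    have "(\<Sum>\<alpha>\<in>A. if \<alpha> \<in> A then fst q \<alpha> else snd q \<alpha>) = (\<Sum>\<alpha>\<in>A. fst q \<alpha>)"
      by (rule sum.cong) auto
    moreover have "\<Psi> (\<lambda>x. if x \<in> A then fst q x else snd q x) = \<Psi> (snd q)"
      by (rule \<Psi>) (use assms(3) in auto)
    ultimately show "((\<lambda>y. (\<Sum>\<alpha>\<in>A. y \<alpha>, \<Psi> y)) \<circ> (\<lambda>(f, g) x. if x \<in> A then f x else g x)) q =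
          (\<lambda>(f, g). (\<Sum>\<alpha>\<in>A. f \<alpha>, \<Psi> g)) q"
      by (simp add: case_prod_unfold)
  qed
  then have "map_pmf (\<lambda>y. (\<Sum>\<alpha>\<in>A. y \<alpha>, \<Psi> y)) (Pi_pmf (A \<union> B) 0 ?p) =
        map_pmf (\<lambda>(f, g). (\<Sum>\<alpha>\<in>A. f \<alpha>, \<Psi> g)) (pair_pmf (Pi_pmf A 0 ?p) (Pi_pmf B 0 ?p))"
    by (simp add: Pi_pmf_union[OF assms(1-3)] pmf.map_comp)
  also have "\<dots> = pair_pmf (pois (\<Sum>\<alpha>\<in>A. m \<alpha>)) (map_pmf \<Psi> (Pi_pmf B 0 ?p))"
    by (simp add: map_pair pois_sum assms(1,4))
  finally show ?thesis .
qed

lemma UNIV_mark: "(UNIV :: mark set) = {RR, CC, RC, CR}"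
  using mark.exhaust by auto

lemma finite_UNIV_mark [simp]: "finite (UNIV :: mark set)"
  by (simp add: UNIV_mark)

lemma sum_mark: "(\<Sum>s\<in>UNIV. f s) = f RR + f CC + f RC + f CR"
  by (simp add: UNIV_mark add.assoc)

lemma Pi_pmf_pois_mark_sums:
  assumes "\<And>s. finite (J s)" and "\<And>s t. s \<noteq> t \<Longrightarrow> J s \<inter> J t = {}" and "\<And>\<alpha>. 0 \<le> m \<alpha>"
  shows "map_pmf (\<lambda>y. (\<Sum>\<alpha>\<in>J RR. y \<alpha>, \<Sum>\<alpha>\<in>J CC. y \<alpha>, \<Sum>\<alpha>\<in>J RC. y \<alpha>, \<Sum>\<alpha>\<in>J CR. y \<alpha>))
           (Pi_pmf (\<Union>s. J s) 0 (\<lambda>\<alpha>. pois (m \<alpha>))) =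
         pair_pmf (pois (\<Sum>\<alpha>\<in>J RR. m \<alpha>)) (pair_pmf (pois (\<Sum>\<alpha>\<in>J CC. m \<alpha>))
           (pair_pmf (pois (\<Sum>\<alpha>\<in>J RC. m \<alpha>)) (pois (\<Sum>\<alpha>\<in>J CR. m \<alpha>))))"
proof -
  let ?p = "\<lambda>\<alpha>. pois (m \<alpha>)"
  have disjoint: "J RR \<inter> (J CC \<union> (J RC \<union> J CR)) = {}" "J CC \<inter> (J RC \<union> J CR) = {}" "J RC \<inter> J CR = {}"
    using assms(2)[of RR CC] assms(2)[of RR RC] assms(2)[of RR CR] assms(2)[of CC RC]
      assms(2)[of CC CR] assms(2)[of RC CR] by auto
  have "(\<Union>s. J s) = J RR \<union> (J CC \<union> (J RC \<union> J CR))" by (auto simp: UNIV_mark)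
  then have "map_pmf (\<lambda>y. (\<Sum>\<alpha>\<in>J RR. y \<alpha>, \<Sum>\<alpha>\<in>J CC. y \<alpha>, \<Sum>\<alpha>\<in>J RC. y \<alpha>, \<Sum>\<alpha>\<in>J CR. y \<alpha>))
           (Pi_pmf (\<Union>s. J s) 0 ?p) =
      pair_pmf (pois (\<Sum>\<alpha>\<in>J RR. m \<alpha>)) (map_pmf (\<lambda>y. (\<Sum>\<alpha>\<in>J CC. y \<alpha>, \<Sum>\<alpha>\<in>J RC. y \<alpha>, \<Sum>\<alpha>\<in>J CR. y \<alpha>))
           (Pi_pmf (J CC \<union> (J RC \<union> J CR)) 0 ?p))"
    by (simp only:) (rule Pi_pmf_pois_sum_split; use assms(1,3) disjoint in \<open>simp cong: sum.cong\<close>)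
  also have "map_pmf (\<lambda>y. (\<Sum>\<alpha>\<in>J CC. y \<alpha>, \<Sum>\<alpha>\<in>J RC. y \<alpha>, \<Sum>\<alpha>\<in>J CR. y \<alpha>))
      (Pi_pmf (J CC \<union> (J RC \<union> J CR)) 0 ?p) =
      pair_pmf (pois (\<Sum>\<alpha>\<in>J CC. m \<alpha>)) (map_pmf (\<lambda>y. (\<Sum>\<alpha>\<in>J RC. y \<alpha>, \<Sum>\<alpha>\<in>J CR. y \<alpha>))
           (Pi_pmf (J RC \<union> J CR) 0 ?p))"
    by (rule Pi_pmf_pois_sum_split; use assms(1,3) disjoint in \<open>simp cong: sum.cong\<close>)
  also have "map_pmf (\<lambda>y. (\<Sum>\<alpha>\<in>J RC. y \<alpha>, \<Sum>\<alpha>\<in>J CR. y \<alpha>)) (Pi_pmf (J RC \<union> J CR) 0 ?p) =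
      pair_pmf (pois (\<Sum>\<alpha>\<in>J RC. m \<alpha>)) (map_pmf (\<lambda>y. \<Sum>\<alpha>\<in>J CR. y \<alpha>) (Pi_pmf (J CR) 0 ?p))"
    by (rule Pi_pmf_pois_sum_split; use assms(1,3) disjoint in \<open>simp cong: sum.cong\<close>)
  finally show ?thesis by (simp only: pois_sum[OF assms(1) assms(3)])
qed

section \<open>Poisson approximation of locally dependent indicators\<close>

lemma local_function_diff_le:
  fixes F :: "('i \<Rightarrow> nat) \<Rightarrow> real"
  assumes J: "finite J"
    and F: "\<And>x. \<bar>F x\<bar> \<le> 1" "\<And>x x'. (\<And>\<beta>. \<beta> \<in> J \<Longrightarrow> x \<beta> = x' \<beta>) \<Longrightarrow> F x = F x'"
  shows "\<bar>F x - F (\<lambda>\<beta>. if \<beta> \<in> K then 0 else x \<beta>)\<bar> \<le> 2 * (\<Sum>\<beta>\<in>J \<inter> K. real (x \<beta>))"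
proof (cases "\<forall>\<beta>\<in>J \<inter> K. x \<beta> = 0")
  case True
  then have "F x = F (\<lambda>\<beta>. if \<beta> \<in> K then 0 else x \<beta>)" by (intro F(2)) auto
  then show ?thesis by (simp add: sum_nonneg)
next
  case False
  then obtain \<beta> where \<beta>: "\<beta> \<in> J \<inter> K" "x \<beta> \<noteq> 0" by auto
  have "1 \<le> real (x \<beta>)" using \<beta> by simp
  also have "\<dots> \<le> (\<Sum>\<beta>\<in>J \<inter> K. real (x \<beta>))" by (rule member_le_sum) (use \<beta> J in auto)
  finally show ?thesis using F(1)[of x] F(1)[of "\<lambda>\<beta>. if \<beta> \<in> K then 0 else x \<beta>"] by simp
qed

locale local_dependence =
  fixes P :: "'w pmf" and I :: "'i set" and X :: "'w \<Rightarrow> 'i \<Rightarrow> nat" and B :: "'i \<Rightarrow> 'i set"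
  assumes finite_set_P: "finite (set_pmf P)" and finite_I: "finite I"
    and X_le_1: "\<And>w j. X w j \<le> 1" and X_zero_outside: "\<And>w j. j \<notin> I \<Longrightarrow> X w j = 0"
    and nbhd_sym: "\<And>j \<beta>. j \<in> I \<Longrightarrow> \<beta> \<in> I \<Longrightarrow> \<beta> \<in> B j \<longleftrightarrow> j \<in> B \<beta>"
    and X_indep_far: "\<And>j g C. j \<in> I \<Longrightarrow> (\<And>z. \<bar>g z\<bar> \<le> C) \<Longrightarrow>
      measure_pmf.expectation P (\<lambda>w. real (X w j) * g (\<lambda>\<beta>. if \<beta> \<in> B j then 0 else X w \<beta>)) =
      measure_pmf.expectation P (\<lambda>w. real (X w j)) *
      measure_pmf.expectation P (\<lambda>w. g (\<lambda>\<beta>. if \<beta> \<in> B j then 0 else X w \<beta>))"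
begin

abbreviation E :: "('w \<Rightarrow> real) \<Rightarrow> real" where
  "E \<equiv> measure_pmf.expectation P"

definition lam :: "'i \<Rightarrow> real" where
  "lam j = E (\<lambda>w. real (X w j))"

definition pair_moment :: "'i \<Rightarrow> 'i \<Rightarrow> real" where
  "pair_moment k \<beta> = lam k * lam \<beta> + E (\<lambda>w. real (X w k) * real (X w \<beta>))"

definition stein_bound :: "'i set \<Rightarrow> real" where
  "stein_bound J = (\<Sum>k\<in>J. 2 * lam k ^ 2 + (\<Sum>\<beta>\<in>J \<inter> B k - {k}. pair_moment k \<beta>))"

lemma integrable_P [simp]: "integrable (measure_pmf P) (f :: 'w \<Rightarrow> real)"
  by (rule integrable_measure_pmf_finite[OF finite_set_P])

lemma E_mono: "(\<And>w. w \<in> set_pmf P \<Longrightarrow> f w \<le> g w) \<Longrightarrow> E f \<le> E g"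
  by (rule integral_mono_AE) (auto simp: AE_measure_pmf_iff)

lemma E_abs_le: "(\<And>w. w \<in> set_pmf P \<Longrightarrow> \<bar>f w\<bar> \<le> g w) \<Longrightarrow> \<bar>E f\<bar> \<le> E g"
  by (rule order_trans[OF integral_abs_bound E_mono]) auto

lemma lam_nonneg: "0 \<le> lam j"
  unfolding lam_def by (rule Bochner_Integration.integral_nonneg) simp

lemma lam_le_1: "lam j \<le> 1"
proof -
  have "lam j \<le> E (\<lambda>w. 1)" unfolding lam_def by (rule E_mono) (use X_le_1 in auto)
  then show ?thesis by simp
qed

lemma X_eq_0_if_lam_eq_0:
  assumes "lam j = 0" "w \<in> set_pmf P"
  shows "X w j = 0"
proof -
  have "AE w in measure_pmf P. real (X w j) = 0"
    using assms(1) unfolding lam_def by (subst (asm) integral_nonneg_eq_0_iff_AE) auto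
  then show ?thesis using assms(2) by (simp add: AE_measure_pmf_iff)
qed

lemma pair_moment_nonneg: "0 \<le> pair_moment k \<beta>"
  unfolding pair_moment_def
  by (intro add_nonneg_nonneg mult_nonneg_nonneg lam_nonneg Bochner_Integration.integral_nonneg) auto

lemma pair_moment_sym: "pair_moment k \<beta> = pair_moment \<beta> k"
  unfolding pair_moment_def by (simp add: mult.commute)

lemma covariance_local_le:
  fixes F :: "('i \<Rightarrow> nat) \<Rightarrow> real"
  assumes j: "j \<in> I" and J: "finite J"
    and F: "\<And>x. \<bar>F x\<bar> \<le> 1" "\<And>x x'. (\<And>\<beta>. \<beta> \<in> J \<Longrightarrow> x \<beta> = x' \<beta>) \<Longrightarrow> F x = F x'"
  shows "\<bar>E (\<lambda>w. real (X w j) * F (X w)) - lam j * E (\<lambda>w. F (X w))\<bar>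
           \<le> 2 * (\<Sum>\<beta>\<in>J \<inter> B j. pair_moment j \<beta>)"
proof -
  define Z where "Z w = (\<lambda>\<beta>. if \<beta> \<in> B j then 0 else X w \<beta>)" for w
  define N where "N w = (\<Sum>\<beta>\<in>J \<inter> B j. real (X w \<beta>))" for w
  have F_diff: "\<bar>F (X w) - F (Z w)\<bar> \<le> 2 * N w" for w
    unfolding Z_def N_def by (rule local_function_diff_le[OF J F])
  have far: "E (\<lambda>w. real (X w j) * F (Z w)) = lam j * E (\<lambda>w. F (Z w))"
    unfolding Z_def lam_def by (rule X_indep_far[OF j F(1)])
  have "E (\<lambda>w. real (X w j) * F (X w)) - lam j * E (\<lambda>w. F (X w))
      = E (\<lambda>w. real (X w j) * (F (X w) - F (Z w))) - lam j * E (\<lambda>w. F (X w) - F (Z w))"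
    using far by (simp add: right_diff_distrib)
  moreover have "\<bar>E (\<lambda>w. real (X w j) * (F (X w) - F (Z w)))\<bar> \<le> 2 * (\<Sum>\<beta>\<in>J \<inter> B j. E (\<lambda>w. real (X w j) * real (X w \<beta>)))"
  proof -
    have "\<bar>E (\<lambda>w. real (X w j) * (F (X w) - F (Z w)))\<bar> \<le> E (\<lambda>w. 2 * (\<Sum>\<beta>\<in>J \<inter> B j. real (X w j) * real (X w \<beta>)))"
    proof (rule E_abs_le)
      fix w
      have "\<bar>real (X w j) * (F (X w) - F (Z w))\<bar> = real (X w j) * \<bar>F (X w) - F (Z w)\<bar>"
        by (simp add: abs_mult)
      also have "\<dots> \<le> real (X w j) * (2 * N w)" by (rule mult_left_mono[OF F_diff]) simp
      finally show "\<bar>real (X w j) * (F (X w) - F (Z w))\<bar>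
          \<le> 2 * (\<Sum>\<beta>\<in>J \<inter> B j. real (X w j) * real (X w \<beta>))"
        by (simp add: N_def sum_distrib_left mult.left_commute)
    qed
    then show ?thesis using J by (simp add: Bochner_Integration.integral_sum)
  qed
  moreover have "\<bar>lam j * E (\<lambda>w. F (X w) - F (Z w))\<bar> \<le> 2 * (\<Sum>\<beta>\<in>J \<inter> B j. lam j * lam \<beta>)"
  proof -
    have "\<bar>E (\<lambda>w. F (X w) - F (Z w))\<bar> \<le> E (\<lambda>w. 2 * N w)" by (rule E_abs_le) (rule F_diff)
    also have "\<dots> = 2 * (\<Sum>\<beta>\<in>J \<inter> B j. lam \<beta>)" using J by (simp add: N_def lam_def Bochner_Integration.integral_sum)
    finally have "lam j * \<bar>E (\<lambda>w. F (X w) - F (Z w))\<bar> \<le> lam j * (2 * (\<Sum>\<beta>\<in>J \<inter> B j. lam \<beta>))"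
      by (rule mult_left_mono) (rule lam_nonneg)
    then show ?thesis using lam_nonneg[of j] by (simp add: abs_mult sum_distrib_left mult.left_commute)
  qed
  ultimately show ?thesis by (simp add: pair_moment_def sum.distrib abs_le_iff)
qed

abbreviation poisson_field :: "'i set \<Rightarrow> ('i \<Rightarrow> nat) pmf" where
  "poisson_field K \<equiv> Pi_pmf K 0 (\<lambda>\<alpha>. pois (lam \<alpha>))"

text \<open>\<open>E (\<lambda>w. hybrid A J (X w))\<close> is the probability of \<open>A\<close> for the field that equals \<open>X\<close> on \<open>J\<close>
  and is independent Poisson off \<open>J\<close>; it interpolates between the Poisson field (\<open>J = {}\<close>)
  and \<open>X\<close> itself (\<open>J = I\<close>).\<close>

definition hybrid :: "('i \<Rightarrow> nat) set \<Rightarrow> 'i set \<Rightarrow> ('i \<Rightarrow> nat) \<Rightarrow> real" where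
  "hybrid A J x = measure_pmf.expectation (poisson_field (I - J)) (\<lambda>y. indicator A (override_on y x J))"

lemma hybrid_nonneg: "0 \<le> hybrid A J x"
  unfolding hybrid_def by (rule Bochner_Integration.integral_nonneg) auto

lemma hybrid_le_1: "hybrid A J x \<le> 1"
proof -
  have "hybrid A J x \<le> measure_pmf.expectation (poisson_field (I - J)) (\<lambda>y. 1)"
    unfolding hybrid_def
    by (rule Bochner_Integration.integral_mono) (auto intro!: integrable_pmf_bounded[where C=1] simp: indicator_def)
  then show ?thesis by simp
qed

lemma hybrid_local: "(\<And>\<alpha>. \<alpha> \<in> J \<Longrightarrow> x \<alpha> = x' \<alpha>) \<Longrightarrow> hybrid A J x = hybrid A J x'"
  unfolding hybrid_def override_on_def by (auto intro!: Bochner_Integration.integral_cong arg_cong[where f="indicator A"])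

lemma hybrid_empty: "hybrid A {} x = measure_pmf.prob (poisson_field I) A"
  by (simp add: hybrid_def)

lemma hybrid_all: "hybrid A I (X w) = indicator A (X w)"
proof -
  have "override_on (\<lambda>_. 0) (X w) I = X w" using X_zero_outside by (auto simp: override_on_def)
  then show ?thesis by (simp add: hybrid_def)
qed

lemma hybrid_insert:
  assumes "j \<in> I" "j \<notin> J"
  shows "hybrid A J x = measure_pmf.expectation (pois (lam j)) (\<lambda>v. hybrid A (insert j J) (x(j := v)))"
proof -
  have IJ: "I - J = insert j (I - insert j J)" using assms by auto
  have "hybrid A J x = measure_pmf.expectation (pair_pmf (pois (lam j)) (poisson_field (I - insert j J)))
                   (\<lambda>p. indicator A (override_on ((snd p)(j := fst p)) x J))"
    unfolding hybrid_def IJ by (subst Pi_pmf_insert) (use finite_I in \<open>auto simp: case_prod_unfold\<close>)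
  also have "\<dots> = measure_pmf.expectation (pois (lam j)) (\<lambda>v. measure_pmf.expectation
      (poisson_field (I - insert j J)) (\<lambda>f. indicator A (override_on (f(j := v)) x J)))"
    by (rule expectation_pair_pmf[where C=1 and
          h="\<lambda>p. indicator A (override_on ((snd p)(j := fst p)) x J)", simplified])
  also have "\<dots> = measure_pmf.expectation (pois (lam j)) (\<lambda>v. hybrid A (insert j J) (x(j := v)))"
    unfolding hybrid_def
    by (intro Bochner_Integration.integral_cong refl arg_cong[where f="indicator A"])
       (use assms in \<open>auto simp: override_on_def fun_eq_iff\<close>)
  finally show ?thesis .
qed

lemma E_poisson_replacement_le:
  assumes j: "j \<in> I" and J: "finite J"
    and u: "\<And>x v. 0 \<le> u x v" "\<And>x v. u x v \<le> 1"
    and u_local: "\<And>x x'. (\<And>\<beta>. \<beta> \<in> J \<Longrightarrow> x \<beta> = x' \<beta>) \<Longrightarrow> u x = u x'"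
  shows "\<bar>E (\<lambda>w. u (X w) (X w j) - measure_pmf.expectation (pois (lam j)) (u (X w)))\<bar>
           \<le> 2 * lam j ^ 2 + 2 * (\<Sum>\<beta>\<in>J \<inter> B j. pair_moment j \<beta>)"
proof (cases "lam j = 0")
  case True
  then have "E (\<lambda>w. u (X w) (X w j) - measure_pmf.expectation (pois (lam j)) (u (X w))) = E (\<lambda>w. 0)"
    by (intro expectation_cong_set_pmf) (simp add: X_eq_0_if_lam_eq_0 pois_def)
  then show ?thesis by (simp add: pair_moment_nonneg sum_nonneg)
next
  case False
  define m where "m = lam j"
  have m: "0 < m" "m \<le> 1" using False lam_nonneg[of j] lam_le_1[of j] unfolding m_def by auto
  define U where "U x = measure_pmf.expectation (poisson_pmf m) (u x)" for x
  define g1 where "g1 x = (u x 0 - U x) / m" for x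
  define g2 where "g2 x = (u x 1 - U x + g1 x) / m" for x
  define G where "G x = (if x j = 0 then g1 x else g2 x)" for x
  have g_bounds: "\<bar>g1 x\<bar> \<le> 1" "\<bar>g2 x\<bar> \<le> 1" for x
    using poisson_stein_solution(1,2)[OF m u(1,2) U_def g1_def g2_def] .
  have stein: "u x k - U x = m * (if k = 0 then g1 x else g2 x) - real k * g1 x" if "k \<le> 1" for x k
    using poisson_stein_solution(3)[OF m u(1,2) U_def g1_def g2_def that] .
  have pois_U: "measure_pmf.expectation (pois (lam j)) (u x) = U x" for x
    using m by (simp add: U_def m_def pois_def)
  have g1_local: "g1 x = g1 x'" if "\<And>\<beta>. \<beta> \<in> J \<Longrightarrow> x \<beta> = x' \<beta>" for x x'
    using u_local[OF that] by (simp add: g1_def U_def)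
  have "E (\<lambda>w. u (X w) (X w j) - measure_pmf.expectation (pois (lam j)) (u (X w)))
      = E (\<lambda>w. m * G (X w) - real (X w j) * g1 (X w))"
    unfolding pois_U G_def by (intro expectation_cong_set_pmf stein X_le_1)
  also have "\<dots> = m * E (\<lambda>w. G (X w) - g1 (X w)) - (E (\<lambda>w. real (X w j) * g1 (X w)) - m * E (\<lambda>w. g1 (X w)))"
    by (simp add: algebra_simps)
  finally have split: "E (\<lambda>w. u (X w) (X w j) - measure_pmf.expectation (pois (lam j)) (u (X w))) = \<dots>" .
  have "\<bar>E (\<lambda>w. G (X w) - g1 (X w))\<bar> \<le> E (\<lambda>w. 2 * real (X w j))"
  proof (rule E_abs_le)
    fix w
    show "\<bar>G (X w) - g1 (X w)\<bar> \<le> 2 * real (X w j)"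
      using g_bounds[of "X w"] by (cases "X w j") (auto simp: G_def)
  qed
  then have "\<bar>m * E (\<lambda>w. G (X w) - g1 (X w))\<bar> \<le> 2 * lam j ^ 2"
    using m by (simp add: abs_mult lam_def m_def power2_eq_square mult_left_mono)
  moreover have "\<bar>E (\<lambda>w. real (X w j) * g1 (X w)) - m * E (\<lambda>w. g1 (X w))\<bar> \<le> 2 * (\<Sum>\<beta>\<in>J \<inter> B j. pair_moment j \<beta>)"
    unfolding m_def by (rule covariance_local_le[OF j J g_bounds(1) g1_local])
  ultimately show ?thesis unfolding split by linarith
qed

lemma hybrid_insert_diff_le:
  assumes j: "j \<in> I" "j \<notin> J" and J: "J \<subseteq> I"
  shows "\<bar>E (\<lambda>w. hybrid A (insert j J) (X w)) - E (\<lambda>w. hybrid A J (X w))\<bar>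
           \<le> 2 * lam j ^ 2 + 2 * (\<Sum>\<beta>\<in>J \<inter> B j. pair_moment j \<beta>)"
proof -
  define u where "u x = (\<lambda>v. hybrid A (insert j J) (x(j := v)))" for x
  have "E (\<lambda>w. hybrid A (insert j J) (X w)) - E (\<lambda>w. hybrid A J (X w))
      = E (\<lambda>w. u (X w) (X w j) - measure_pmf.expectation (pois (lam j)) (u (X w)))"
    using hybrid_insert[OF j] by (simp add: u_def)
  also have "\<bar>\<dots>\<bar> \<le> 2 * lam j ^ 2 + 2 * (\<Sum>\<beta>\<in>J \<inter> B j. pair_moment j \<beta>)"
  proof (rule E_poisson_replacement_le[OF j(1)])
    show "finite J" using J finite_I finite_subset by blast
    show "u x = u x'" if "\<And>\<beta>. \<beta> \<in> J \<Longrightarrow> x \<beta> = x' \<beta>" for x x'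
      unfolding u_def by (intro ext hybrid_local) (use that in auto)
  qed (simp_all add: u_def hybrid_nonneg hybrid_le_1)
  finally show ?thesis .
qed

lemma stein_bound_insert:
  assumes "finite J" "J \<subseteq> I" "j \<in> I" "j \<notin> J"
  shows "stein_bound (insert j J) = stein_bound J + 2 * lam j ^ 2 + 2 * (\<Sum>\<beta>\<in>J \<inter> B j. pair_moment j \<beta>)"
proof -
  have new_nbrs: "(\<Sum>\<beta>\<in>insert j J \<inter> B k - {k}. pair_moment k \<beta>)
      = (\<Sum>\<beta>\<in>J \<inter> B k - {k}. pair_moment k \<beta>) + (if j \<in> B k then pair_moment k j else 0)"
    if "k \<in> J" for k
  proof (cases "j \<in> B k")
    case True
    then have "insert j J \<inter> B k - {k} = insert j (J \<inter> B k - {k})" using that assms by auto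
    then show ?thesis using True assms by simp
  next
    case False
    then have "insert j J \<inter> B k - {k} = J \<inter> B k - {k}" by auto
    then show ?thesis using False by simp
  qed
  have "(\<Sum>k\<in>J. if j \<in> B k then pair_moment k j else 0) = (\<Sum>k\<in>J. if k \<in> B j then pair_moment j k else 0)"
    by (intro sum.cong refl) (use assms nbhd_sym pair_moment_sym in auto)
  also have "\<dots> = (\<Sum>\<beta>\<in>J \<inter> B j. pair_moment j \<beta>)"
    using assms by (simp add: sum.If_cases Int_def)
  finally have sym: "(\<Sum>k\<in>J. if j \<in> B k then pair_moment k j else 0) = (\<Sum>\<beta>\<in>J \<inter> B j. pair_moment j \<beta>)" .
  have "insert j J \<inter> B j - {j} = J \<inter> B j" using assms by auto
  then show ?thesis
    using assms by (simp add: stein_bound_def new_nbrs sum.distrib sym)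
qed

lemma E_hybrid_diff_le_stein_bound:
  assumes "J \<subseteq> I"
  shows "\<bar>E (\<lambda>w. hybrid A J (X w)) - measure_pmf.prob (poisson_field I) A\<bar> \<le> stein_bound J"
proof -
  have "finite J" using assms finite_I finite_subset by blast
  then show ?thesis using assms
  proof (induction J rule: finite_subset_induct')
    case empty
    then show ?case by (simp add: hybrid_empty stein_bound_def)
  next
    case (insert j J)
    then show ?case using hybrid_insert_diff_le[of j J A] stein_bound_insert[of J j] by linarith
  qed
qed

theorem dTV_le_stein_bound: "dTV (map_pmf X P) (poisson_field I) \<le> stein_bound I"
  unfolding dTV_def
proof (rule cSUP_least)
  fix A
  have "measure_pmf.prob (map_pmf X P) A = E (\<lambda>w. indicator A (X w))"
    by (simp add: integral_map_pmf[symmetric] del: integral_map_pmf)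
  also have "\<dots> = E (\<lambda>w. hybrid A I (X w))" by (simp add: hybrid_all)
  finally show "\<bar>measure_pmf.prob (map_pmf X P) A - measure_pmf.prob (poisson_field I) A\<bar> \<le> stein_bound I"
    using E_hybrid_diff_le_stein_bound[of I A] by simp
qed simp

end

section \<open>Coincidences on the board\<close>

lemma coinc_le_1: "coinc w \<alpha> \<le> 1"
proof -
  obtain a b s where "\<alpha> = ((a, b), s)" by (metis prod.exhaust)
  then show ?thesis by (cases s) auto
qed

lemma coinc_cong: "w a = w' a \<Longrightarrow> w b = w' b \<Longrightarrow> coinc w ((a, b), s) = coinc w' ((a, b), s)"
  by (cases s) auto

definition coinc_count :: "nat \<times> nat \<Rightarrow> nat \<times> nat \<Rightarrow> nat" where
  "coinc_count q v = of_bool (fst q = fst v) + of_bool (snd q = snd v)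
     + of_bool (snd q = fst v) + of_bool (fst q = snd v)"

lemma coinc_count_sym: "coinc_count q v = coinc_count v q"
  unfolding coinc_count_def by auto

lemma coinc_count_le_4: "coinc_count q v \<le> 4"
  unfolding coinc_count_def by simp

lemma sum_coinc_marks: "(\<Sum>s\<in>UNIV. coinc w ((a, b), s)) = coinc_count (w a) (w b)"
  unfolding sum_mark coinc_count_def by simp

lemma finite_board [simp]: "finite (board n)"
  by (rule finite_subset[of _ "{1..n} \<times> {1..n}"]) (auto simp: board_def)

lemma card_board: "2 * card (board n) = n * (n - 1)"
proof (induction n)
  case 0
  have "board 0 = {}" by (auto simp: board_def)
  then show ?case by simp
next
  case (Suc n)
  have "board (Suc n) = board n \<union> (\<lambda>i. (i, Suc n)) ` {1..n}"
    by (auto simp: board_def)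
  moreover have "board n \<inter> (\<lambda>i. (i, Suc n)) ` {1..n} = {}" by (auto simp: board_def)
  ultimately have "card (board (Suc n)) = card (board n) + n"
    by (simp add: card_Un_disjoint card_image inj_on_def)
  then show ?case using Suc by (cases n) (auto simp: algebra_simps)
qed

lemma real_card_board: "2 \<le> n \<Longrightarrow> real (card (board n)) = real n * (real n - 1) / 2"
  using arg_cong[OF card_board[of n], of real] by (simp add: of_nat_diff)

lemma board_nonempty: "2 \<le> n \<Longrightarrow> board n \<noteq> {}"
proof -
  assume "2 \<le> n"
  then have "(1, 2) \<in> board n" by (simp add: board_def)
  then show "board n \<noteq> {}" by blast
qed

text \<open>The number of coincidences of a square with the others does not depend on the square;
  this is why the coincidence counts of two rooks are independent of the position of either.\<close>

lemma sum_coinc_count_board: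
  assumes "q \<in> board n"
  shows "(\<Sum>v\<in>board n. coinc_count q v) = 2 * n - 2"
proof -
  obtain i j where q: "q = (i, j)" "1 \<le> i" "i < j" "j \<le> n" using assms by (auto simp: board_def)
  have row: "card {v \<in> board n. k = fst v} = n - k" if "1 \<le> k" for k
  proof -
    have "{v \<in> board n. k = fst v} = Pair k ` {k<..n}" using that by (auto simp: board_def)
    then show ?thesis by (simp add: card_image inj_on_def)
  qed
  have column: "card {v \<in> board n. k = snd v} = k - 1" if "k \<le> n" for k
  proof -
    have "{v \<in> board n. k = snd v} = (\<lambda>x. (x, k)) ` {1..<k}" using that by (auto simp: board_def)
    then show ?thesis by (simp add: card_image inj_on_def)
  qed
  have "(\<Sum>v\<in>board n. coinc_count q v) = card {v \<in> board n. i = fst v} + card {v \<in> board n. j = snd v}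
        + card {v \<in> board n. j = fst v} + card {v \<in> board n. i = snd v}"
    unfolding coinc_count_def q sum.distrib by (simp add: Int_def Collect_conj_eq[symmetric] conj_commute)
  also have "\<dots> = (n - i) + (j - 1) + (n - j) + (i - 1)" using q by (simp add: row column)
  also have "\<dots> = 2 * n - 2" using q by simp
  finally show ?thesis .
qed

lemma expectation_coinc_count_board:
  assumes "q \<in> board n" "2 \<le> n"
  shows "measure_pmf.expectation (pmf_of_set (board n)) (\<lambda>v. real (coinc_count q v)) = 4 / real n"
  using assms board_nonempty[OF assms(2)]
  by (simp add: integral_pmf_of_set sum_coinc_count_board real_card_board
      flip: of_nat_sum) (simp add: field_simps)

lemma expectation_eq_board:
  assumes "q \<in> board n" "2 \<le> n"
  shows "measure_pmf.expectation (pmf_of_set (board n)) (\<lambda>v. if q = v then 1 else 0 :: real)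
           = 2 / (real n * (real n - 1))"
  using assms board_nonempty[OF assms(2)] by (simp add: integral_pmf_of_set real_card_board)

lemma rook_index_eq: "rook_index r = board r \<times> UNIV"
  unfolding rook_index_def board_def by auto

lemma finite_rook_index: "finite (rook_index r)"
  by (simp add: rook_index_eq)

lemma UN_rook_index_mark: "(\<Union>s. rook_index_mark r s) = rook_index r"
  unfolding rook_index_mark_def by auto

lemma rook_index_mark_disjoint: "s \<noteq> t \<Longrightarrow> rook_index_mark r s \<inter> rook_index_mark r t = {}"
  unfolding rook_index_mark_def by auto

section \<open>The rook model\<close>

locale rook_model =
  fixes n r :: nat
  assumes two_le_n: "2 \<le> n" and r_less_n: "r < n"
begin

text \<open>\<open>Suc 0\<close> rather than \<open>1\<close>: it is the simp normal form, so facts about \<open>P\<close> below still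
  match after simplification.\<close>
abbreviation rooks :: "nat set" where "rooks \<equiv> {Suc 0..r}"
abbreviation square :: "(nat \<times> nat) pmf" where "square \<equiv> pmf_of_set (board n)"

text \<open>The uniform law on \<open>PiE {1..r} (\<lambda>_. board n)\<close> as an independent product; the default
  value \<open>undefined\<close> outside the rooks matches the extensional functions of \<open>PiE\<close>.\<close>
abbreviation P :: "(nat \<Rightarrow> nat \<times> nat) pmf" where "P \<equiv> Pi_pmf rooks undefined (\<lambda>_. square)"

lemma rook_config_eq: "rook_config n r = P"
proof -
  have "PiE_dflt rooks undefined (\<lambda>_. board n) = PiE rooks (\<lambda>_. board n)"
    by (auto simp: PiE_dflt_def PiE_def extensional_def Pi_def)
  then show ?thesis unfolding rook_config_def
    by (subst Pi_pmf_of_set) (use board_nonempty[OF two_le_n] in auto)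
qed

lemma set_pmf_Pi_square: "f \<in> set_pmf (Pi_pmf L undefined (\<lambda>_. square)) \<Longrightarrow> finite L \<Longrightarrow> a \<in> L \<Longrightarrow> f a \<in> board n"
  using board_nonempty[OF two_le_n] by (auto simp: set_Pi_pmf PiE_dflt_def)

lemma finite_set_pmf_P: "finite (set_pmf P)"
  using board_nonempty[OF two_le_n] by (simp add: set_Pi_pmf finite_PiE_dflt)

lemma expectation_coinc_count:
  assumes "a \<in> rooks" "b \<in> rooks" "a \<noteq> b"
  shows "measure_pmf.expectation P (\<lambda>w. real (coinc_count (w a) (w b))) = 4 / real n"
proof -
  have "measure_pmf.expectation P (\<lambda>w. real (coinc_count (w a) (w b))) =
        measure_pmf.expectation (Pi_pmf (rooks - {b}) undefined (\<lambda>_. square))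
          (\<lambda>f. measure_pmf.expectation square (\<lambda>v. real (coinc_count (f a) v)))"
    using assms by (subst expectation_Pi_pmf_remove[where C=4 and c=b]) (auto intro: coinc_count_le_4)
  also have "\<dots> = measure_pmf.expectation (Pi_pmf (rooks - {b}) undefined (\<lambda>_. square)) (\<lambda>f. 4 / real n)"
    using assms two_le_n
    by (intro expectation_cong_set_pmf expectation_coinc_count_board set_pmf_Pi_square) auto
  finally show ?thesis by simp
qed

lemma prob_same_square:
  assumes "a \<in> rooks" "b \<in> rooks" "a \<noteq> b"
  shows "measure_pmf.expectation P (\<lambda>w. if w a = w b then 1 else 0 :: real) = 2 / (real n * (real n - 1))"
proof -
  have "measure_pmf.expectation P (\<lambda>w. if w a = w b then 1 else 0 :: real) =
        measure_pmf.expectation (Pi_pmf (rooks - {b}) undefined (\<lambda>_. square))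
          (\<lambda>f. measure_pmf.expectation square (\<lambda>v. if f a = v then 1 else 0 :: real))"
    using assms by (subst expectation_Pi_pmf_remove[where C=1 and c=b]) auto
  also have "\<dots> = measure_pmf.expectation (Pi_pmf (rooks - {b}) undefined (\<lambda>_. square))
                    (\<lambda>f. 2 / (real n * (real n - 1)))"
    using assms two_le_n by (intro expectation_cong_set_pmf expectation_eq_board set_pmf_Pi_square) auto
  finally show ?thesis by simp
qed

lemma expectation_coinc_count_product:
  assumes "x \<in> rooks" "y \<in> rooks" "z \<in> rooks" "x \<noteq> y" "x \<noteq> z" "y \<noteq> z"
  shows "measure_pmf.expectation P (\<lambda>w. real (coinc_count (w x) (w y)) * real (coinc_count (w x) (w z)))
           = 16 / (real n)^2"
proof -
  let ?P' = "Pi_pmf (rooks - {z}) undefined (\<lambda>_. square)"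
  have bound: "\<bar>real (coinc_count q v) * real (coinc_count q' v')\<bar> \<le> 16" for q v q' v'
    using mult_mono[OF coinc_count_le_4[of q v] coinc_count_le_4[of q' v']] by (simp flip: of_nat_mult)
  have "measure_pmf.expectation P (\<lambda>w. real (coinc_count (w x) (w y)) * real (coinc_count (w x) (w z))) =
        measure_pmf.expectation ?P' (\<lambda>f. measure_pmf.expectation square
          (\<lambda>v. real (coinc_count (f x) (f y)) * real (coinc_count (f x) v)))"
    by (subst expectation_Pi_pmf_remove[where C=16 and c=z]) (use assms bound in auto)
  also have "\<dots> = measure_pmf.expectation ?P' (\<lambda>f. real (coinc_count (f x) (f y)) * (4 / real n))"
    using assms two_le_n
    by (intro expectation_cong_set_pmf) (simp add: expectation_coinc_count_board set_pmf_Pi_square)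
  also have "\<dots> = measure_pmf.expectation ?P' (\<lambda>f. real (coinc_count (f x) (f y))) * (4 / real n)"
    by simp
  also have "measure_pmf.expectation ?P' (\<lambda>f. real (coinc_count (f x) (f y))) =
             measure_pmf.expectation P (\<lambda>w. real (coinc_count (w x) (w y)))"
    using assms by (subst (2) expectation_Pi_pmf_remove[where C=4 and c=z]) (auto intro: coinc_count_le_4)
  finally show ?thesis using expectation_coinc_count[of x y] assms by (simp add: power2_eq_square)
qed

definition coinc_field :: "(nat \<Rightarrow> nat \<times> nat) \<Rightarrow> (nat \<times> nat) \<times> mark \<Rightarrow> nat" where
  "coinc_field w \<alpha> = (if \<alpha> \<in> rook_index r then coinc w \<alpha> else 0)"

definition shares_rook :: "(nat \<times> nat) \<times> mark \<Rightarrow> ((nat \<times> nat) \<times> mark) set" where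
  "shares_rook j = {\<beta>. {fst (fst \<beta>), snd (fst \<beta>)} \<inter> {fst (fst j), snd (fst j)} \<noteq> {}}"

lemma coinc_field_indep_far:
  assumes j: "j \<in> rook_index r" and g: "\<And>z. \<bar>g z\<bar> \<le> C"
  shows "measure_pmf.expectation P (\<lambda>w. real (coinc_field w j) * g (\<lambda>\<beta>. if \<beta> \<in> shares_rook j then 0 else coinc_field w \<beta>)) =
         measure_pmf.expectation P (\<lambda>w. real (coinc_field w j)) *
         measure_pmf.expectation P (\<lambda>w. g (\<lambda>\<beta>. if \<beta> \<in> shares_rook j then 0 else coinc_field w \<beta>))"
proof -
  obtain a b s where j: "j = ((a, b), s)" "1 \<le> a" "a < b" "b \<le> r"
    using j unfolding rook_index_def by auto
  have far: "(\<lambda>\<beta>. if \<beta> \<in> shares_rook j then 0 else coinc_field w \<beta>) =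
             (\<lambda>\<beta>. if \<beta> \<in> shares_rook j then 0 else coinc_field w' \<beta>)"
    if "\<And>x. x \<in> rooks - {a, b} \<Longrightarrow> w x = w' x" for w w'
  proof
    fix \<beta> :: "(nat \<times> nat) \<times> mark"
    obtain a' b' t where \<beta>: "\<beta> = ((a', b'), t)" by (metis prod.exhaust)
    show "(if \<beta> \<in> shares_rook j then 0 else coinc_field w \<beta>) = (if \<beta> \<in> shares_rook j then 0 else coinc_field w' \<beta>)"
      using that unfolding coinc_field_def shares_rook_def rook_index_def \<beta> j
      by (auto intro!: coinc_cong)
  qed
  show ?thesis
  proof (rule expectation_Pi_pmf_mult_indep[where S="{a, b}" and C\<^sub>\<phi>=1 and C\<^sub>\<psi>=C])
    show "finite rooks" "{a, b} \<subseteq> rooks" using j by auto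
    show "real (coinc_field w j) = real (coinc_field w' j)" if "\<And>x. x \<in> {a, b} \<Longrightarrow> w x = w' x" for w w'
      using that coinc_cong[of w a w' b s] by (simp add: coinc_field_def j)
    show "\<bar>real (coinc_field w j)\<bar> \<le> 1" for w
      using coinc_le_1[of w j] by (simp add: coinc_field_def)
    show "g (\<lambda>\<beta>. if \<beta> \<in> shares_rook j then 0 else coinc_field w \<beta>) =
          g (\<lambda>\<beta>. if \<beta> \<in> shares_rook j then 0 else coinc_field w' \<beta>)"
      if "\<And>x. x \<in> rooks - {a, b} \<Longrightarrow> w x = w' x" for w w'
      by (simp only: far[OF that])
  qed (rule g)
qed

lemma rook_local_dependence: "local_dependence P (rook_index r) coinc_field shares_rook"
proof
  show "finite (set_pmf P)" by (rule finite_set_pmf_P)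
  show "finite (rook_index r)" by (rule finite_rook_index)
  show "coinc_field w j \<le> 1" for w j using coinc_le_1[of w j] by (simp add: coinc_field_def)
  show "coinc_field w j = 0" if "j \<notin> rook_index r" for w j using that by (simp add: coinc_field_def)
  show "\<beta> \<in> shares_rook j \<longleftrightarrow> j \<in> shares_rook \<beta>" for j \<beta> unfolding shares_rook_def by blast
qed (rule coinc_field_indep_far)

end

text \<open>Of the four coincidences between two squares, each with row less than column, only the
  row and the column coincidence can hold together, and only if the squares are equal.\<close>

lemma coinc_marks_cross_le:
  fixes q q' :: "nat \<times> nat"
  assumes "fst q < snd q" "fst q' < snd q'"
  defines "c1 \<equiv> (if fst q = fst q' then 1 else 0 :: real)"
      and "c2 \<equiv> (if snd q = snd q' then 1 else 0 :: real)"
      and "c3 \<equiv> (if snd q = fst q' then 1 else 0 :: real)"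
      and "c4 \<equiv> (if fst q = snd q' then 1 else 0 :: real)"
  shows "(c1 + c2 + c3 + c4)^2 - (c1^2 + c2^2 + c3^2 + c4^2) \<le> 2 * (if q = q' then 1 else 0)"
proof -
  have "(c1 + c2 + c3 + c4)^2 - (c1^2 + c2^2 + c3^2 + c4^2)
      = 2 * (c1*c2 + c1*c3 + c1*c4 + c2*c3 + c2*c4 + c3*c4)"
    by (simp add: power2_eq_square algebra_simps)
  moreover have "c1*c3 = 0" "c1*c4 = 0" "c2*c3 = 0" "c2*c4 = 0" "c3*c4 = 0"
    using assms(1,2) unfolding c1_def c2_def c3_def c4_def by auto
  moreover have "c1 * c2 \<le> (if q = q' then 1 else 0)"
    unfolding c1_def c2_def by (auto simp: prod_eq_iff)
  ultimately show ?thesis by simp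
qed

lemma sum_off_diagonal_mark:
  fixes g :: "mark \<Rightarrow> mark \<Rightarrow> real"
  shows "(\<Sum>s\<in>UNIV. \<Sum>t\<in>UNIV - {s}. g s t) = (\<Sum>s\<in>UNIV. \<Sum>t\<in>UNIV. g s t) - (\<Sum>s\<in>UNIV. g s s)"
proof -
  have "(\<Sum>t\<in>UNIV - {s}. g s t) = (\<Sum>t\<in>UNIV. g s t) - g s s" for s
    using sum.remove[of UNIV s "g s"] by simp
  then show ?thesis by (simp add: sum_subtractf)
qed

lemma rook_bound_ge:
  assumes "2 \<le> r" "r < n"
  shows "real r * (real r - 1) / 2 * (32 / (real n)^2 + 64 * (real r - 2) / (real n)^2
           + 4 / (real n * (real n - 1))) \<le> rook_bound n r"
proof -
  define R where "R = real r"
  define N where "N = real n"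
  have R: "2 \<le> R" and N: "3 \<le> N" using assms unfolding R_def N_def by simp_all
  define d where "d = R - 3/2"
  define Q where "Q = (N * (N - 301/181) + 166) / (N - 1)^2"
  text \<open>The constants of the stated bound are generous: the term \<open>2 / (N * (N - 1))\<close> is
    absorbed as \<open>d \<ge> 1/2\<close>, and the last factor \<open>Q\<close> of \<^const>\<open>rook_bound\<close> is at least \<open>1\<close>.\<close>
  have Q: "1 \<le> Q"
  proof -
    have "(N - 1)^2 \<le> N * (N - 301/181) + 166" using N by (simp add: power2_eq_square algebra_simps)
    moreover have "0 < (N - 1)^2" using N by simp
    ultimately show ?thesis unfolding Q_def by simp
  qed
  have "2 / (N * (N - 1)) \<le> 3 / N^2"
  proof -
    have "2 * N^2 \<le> 3 * (N * (N - 1))" using N by (simp add: power2_eq_square algebra_simps)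
    then show ?thesis using N by (simp add: field_simps power2_eq_square)
  qed
  also have "3 / N^2 \<le> (74/9) * d / N^2"
    using R by (intro divide_right_mono) (simp_all add: d_def)
  finally have small: "2 / (N * (N - 1)) \<le> (74/9) * d / N^2" .
  have "R * (R - 1) / 2 * (32 / N^2 + 64 * (R - 2) / N^2 + 4 / (N * (N - 1)))
      = R * (R - 1) * (32 * d / N^2 + 2 / (N * (N - 1)))"
    using N by (simp add: d_def field_simps power2_eq_square)
  also have "\<dots> \<le> R * (R - 1) * ((362/9) * d / N^2)"
    using R small by (intro mult_left_mono) (simp_all add: field_simps)
  also have "\<dots> \<le> R * (R - 1) * ((362/9) * d / N^2) * Q"
    using mult_left_mono[OF Q, of "R * (R - 1) * ((362/9) * d / N^2)"] R by (simp add: d_def)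
  also have "\<dots> = rook_bound n r"
    unfolding rook_bound_def Q_def d_def R_def N_def by (simp add: field_simps)
  finally show ?thesis unfolding R_def N_def .
qed

context rook_model
begin

interpretation S: local_dependence P "rook_index r" coinc_field shares_rook
  by (rule rook_local_dependence)

lemma rooks_of_board: "(a, b) \<in> board r \<Longrightarrow> a \<in> rooks \<and> b \<in> rooks \<and> a < b"
  by (auto simp: board_def)

lemma coinc_field_board: "p \<in> board r \<Longrightarrow> coinc_field w (p, s) = coinc w (p, s)"
  by (simp add: coinc_field_def rook_index_eq)

lemma sum_lam_marks:
  assumes "p \<in> board r"
  shows "(\<Sum>s\<in>UNIV. S.lam (p, s)) = 4 / real n"
proof -
  obtain a b where p: "p = (a, b)" and ab: "a \<in> rooks" "b \<in> rooks" "a \<noteq> b"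
    using assms rooks_of_board by (cases p) fastforce
  have "(\<Sum>s\<in>UNIV. S.lam (p, s)) = S.E (\<lambda>w. \<Sum>s\<in>UNIV. real (coinc w (p, s)))"
    using assms by (simp add: S.lam_def coinc_field_board Bochner_Integration.integral_sum)
  also have "\<dots> = S.E (\<lambda>w. real (coinc_count (w a) (w b)))"
    unfolding p by (simp flip: of_nat_sum add: sum_coinc_marks)
  finally show ?thesis using expectation_coinc_count[OF ab] by simp
qed

definition adjacent_pairs :: "nat \<times> nat \<Rightarrow> (nat \<times> nat) set" where
  "adjacent_pairs p = {q \<in> board r. q \<noteq> p \<and> {fst q, snd q} \<inter> {fst p, snd p} \<noteq> {}}"

lemma neighbours_eq:
  assumes "p \<in> board r"
  shows "rook_index r \<inter> shares_rook (p, s) - {(p, s)} = {p} \<times> (UNIV - {s}) \<union> adjacent_pairs p \<times> UNIV"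
  using assms unfolding rook_index_eq shares_rook_def adjacent_pairs_def by auto

lemma card_adjacent_pairs_le:
  assumes "p \<in> board r"
  shows "card (adjacent_pairs p) \<le> 2 * (r - 2)"
proof -
  obtain a b where p: "p = (a, b)" and ab: "a \<in> rooks" "b \<in> rooks" "a < b"
    using assms rooks_of_board by (cases p) fastforce
  have "adjacent_pairs p \<subseteq> (\<lambda>(x, c). (min x c, max x c)) ` ({a, b} \<times> (rooks - {a, b}))"
  proof
    fix q assume q: "q \<in> adjacent_pairs p"
    obtain a' b' where q': "q = (a', b')" by (cases q)
    have h: "a' \<in> rooks" "b' \<in> rooks" "a' < b'" "(a', b') \<noteq> (a, b)" "{a', b'} \<inter> {a, b} \<noteq> {}"
      using q rooks_of_board[of a' b'] unfolding adjacent_pairs_def q' p by auto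
    show "q \<in> (\<lambda>(x, c). (min x c, max x c)) ` ({a, b} \<times> (rooks - {a, b}))"
    proof (cases "a' \<in> {a, b}")
      case True
      then have "b' \<notin> {a, b}" using h ab by auto
      then show ?thesis unfolding q' using True h by (intro image_eqI[where x="(a', b')"]) auto
    next
      case False
      then have "b' \<in> {a, b}" using h by auto
      then show ?thesis unfolding q' using False h by (intro image_eqI[where x="(b', a')"]) auto
    qed
  qed
  then have "card (adjacent_pairs p) \<le> card ((\<lambda>(x, c). (min x c, max x c)) ` ({a, b} \<times> (rooks - {a, b})))"
    by (intro card_mono) auto
  also have "\<dots> \<le> card ({a, b} \<times> (rooks - {a, b}))" by (rule card_image_le) auto
  also have "\<dots> = 2 * (r - 2)" using ab by (simp add: card_cartesian_product card_Diff_subset)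
  finally show ?thesis .
qed

text \<open>Two adjacent pairs share exactly one rook \<open>x\<close>; their other rooks \<open>y\<close> and \<open>z\<close> are distinct.\<close>

lemma expectation_coinc_count_adjacent:
  assumes "p \<in> board r" "q \<in> adjacent_pairs p"
  shows "S.E (\<lambda>w. real (coinc_count (w (fst p)) (w (snd p))) * real (coinc_count (w (fst q)) (w (snd q))))
           = 16 / (real n)^2"
proof -
  obtain a b where p: "p = (a, b)" and ab: "a \<in> rooks" "b \<in> rooks" "a < b"
    using assms rooks_of_board by (cases p) fastforce
  obtain a' b' where q: "q = (a', b')" by (cases q)
  have h: "a' \<in> rooks" "b' \<in> rooks" "a' < b'" "(a', b') \<noteq> (a, b)" "{a', b'} \<inter> {a, b} \<noteq> {}"
    using assms rooks_of_board[of a' b'] unfolding adjacent_pairs_def q p by auto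
  obtain x y z where xyz: "x \<in> rooks" "y \<in> rooks" "z \<in> rooks" "x \<noteq> y" "x \<noteq> z" "y \<noteq> z"
    and same: "\<And>w. coinc_count (w a) (w b) = coinc_count (w x) (w y)"
              "\<And>w. coinc_count (w a') (w b') = coinc_count (w x) (w z)"
  proof -
    consider "a' = a" | "a' = b" | "b' = a" | "b' = b" using h by auto
    then show thesis
    proof cases
      case 1 then show ?thesis using h ab by (intro that[of a b b']) auto
    next
      case 2 then show ?thesis using h ab by (intro that[of b a b']) (auto simp: coinc_count_sym)
    next
      case 3 then show ?thesis using h ab by (intro that[of a b a']) (auto simp: coinc_count_sym)
    next
      case 4 then show ?thesis using h ab by (intro that[of b a a']) (auto simp: coinc_count_sym)
    qed
  qed
  show ?thesis unfolding p q fst_conv snd_conv same by (rule expectation_coinc_count_product[OF xyz])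
qed

lemma off_diagonal_moments_le:
  assumes "p \<in> board r"
  shows "(\<Sum>s\<in>UNIV. \<Sum>t\<in>UNIV - {s}. S.E (\<lambda>w. real (coinc_field w (p, s)) * real (coinc_field w (p, t))))
           \<le> 4 / (real n * (real n - 1))"
proof -
  obtain a b where p: "p = (a, b)" and ab: "a \<in> rooks" "b \<in> rooks" "a \<noteq> b"
    using assms rooks_of_board by (cases p) fastforce
  define c where "c w s = real (coinc w (p, s))" for w s
  have "(\<Sum>s\<in>UNIV. \<Sum>t\<in>UNIV - {s}. S.E (\<lambda>w. real (coinc_field w (p, s)) * real (coinc_field w (p, t))))
        = S.E (\<lambda>w. \<Sum>s\<in>UNIV. \<Sum>t\<in>UNIV - {s}. c w s * c w t)"
    using assms by (simp add: c_def coinc_field_board Bochner_Integration.integral_sum)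
  also have "\<dots> \<le> S.E (\<lambda>w. 2 * (if w a = w b then 1 else 0))"
  proof (rule S.E_mono)
    fix w assume w: "w \<in> set_pmf P"
    have "fst (w a) < snd (w a)" "fst (w b) < snd (w b)"
      using set_pmf_Pi_square[OF w, of a] set_pmf_Pi_square[OF w, of b] ab by (auto simp: board_def)
    note cross = coinc_marks_cross_le[OF this]
    have "(\<Sum>s\<in>UNIV. \<Sum>t\<in>UNIV - {s}. c w s * c w t) = (\<Sum>s\<in>UNIV. c w s)^2 - (\<Sum>s\<in>UNIV. (c w s)^2)"
      unfolding sum_off_diagonal_mark power2_eq_square sum_product by simp
    also have "\<dots> \<le> 2 * (if w a = w b then 1 else 0)"
      using cross unfolding c_def p sum_mark coinc.simps if_distrib[of real] of_nat_1 of_nat_0 .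
    finally show "(\<Sum>s\<in>UNIV. \<Sum>t\<in>UNIV - {s}. c w s * c w t) \<le> 2 * (if w a = w b then 1 else 0)" .
  qed
  also have "\<dots> = 4 / (real n * (real n - 1))"
    using prob_same_square[OF ab] by simp
  finally show ?thesis .
qed

lemma stein_terms_split:
  assumes p: "p \<in> board r"
  shows "(\<Sum>s\<in>UNIV. 2 * S.lam (p, s) ^ 2
            + (\<Sum>\<beta>\<in>rook_index r \<inter> shares_rook (p, s) - {(p, s)}. S.pair_moment (p, s) \<beta>))
       = (\<Sum>s\<in>UNIV. 2 * S.lam (p, s) ^ 2 + (\<Sum>t\<in>UNIV - {s}. S.pair_moment (p, s) (p, t)))
         + (\<Sum>s\<in>UNIV. \<Sum>q\<in>adjacent_pairs p. \<Sum>t\<in>UNIV. S.pair_moment (p, s) (q, t))"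
proof -
  have split: "(\<Sum>\<beta>\<in>rook_index r \<inter> shares_rook (p, s) - {(p, s)}. F \<beta>)
      = (\<Sum>t\<in>UNIV - {s}. F (p, t)) + (\<Sum>q\<in>adjacent_pairs p. \<Sum>t\<in>UNIV. F (q, t))" for s F
  proof -
    have "(\<Sum>\<beta>\<in>rook_index r \<inter> shares_rook (p, s) - {(p, s)}. F \<beta>)
        = (\<Sum>\<beta>\<in>{p} \<times> (UNIV - {s}). F \<beta>) + (\<Sum>\<beta>\<in>adjacent_pairs p \<times> UNIV. F \<beta>)"
      unfolding neighbours_eq[OF p]
      by (rule sum.union_disjoint) (auto simp: adjacent_pairs_def)
    also have "(\<Sum>\<beta>\<in>{p} \<times> (UNIV - {s}). F \<beta>) = (\<Sum>t\<in>UNIV - {s}. F (p, t))"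
      using sum.cartesian_product[where g="\<lambda>q t. F (q, t)" and A="{p}" and B="UNIV - {s}"]
      by (simp add: prod.case_eq_if)
    also have "(\<Sum>\<beta>\<in>adjacent_pairs p \<times> UNIV. F \<beta>) = (\<Sum>q\<in>adjacent_pairs p. \<Sum>t\<in>UNIV. F (q, t))"
      using sum.cartesian_product[where g="\<lambda>q t. F (q, t)" and A="adjacent_pairs p" and B=UNIV]
      by (simp add: prod.case_eq_if)
    finally show ?thesis .
  qed
  show ?thesis by (simp only: split sum.distrib add.assoc)
qed

lemma same_pair_terms_le:
  assumes p: "p \<in> board r"
  shows "(\<Sum>s\<in>UNIV. 2 * S.lam (p, s) ^ 2 + (\<Sum>t\<in>UNIV - {s}. S.pair_moment (p, s) (p, t)))
           \<le> 32 / (real n)^2 + 4 / (real n * (real n - 1))"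
proof -
  define L where "L = (\<Sum>s\<in>UNIV. S.lam (p, s))"
  have "(\<Sum>s\<in>UNIV. \<Sum>t\<in>UNIV - {s}. S.lam (p, s) * S.lam (p, t)) = L^2 - (\<Sum>s\<in>UNIV. S.lam (p, s) ^ 2)"
    unfolding sum_off_diagonal_mark L_def power2_eq_square sum_product by simp
  moreover have "0 \<le> (\<Sum>s\<in>UNIV. \<Sum>t\<in>UNIV - {s}. S.lam (p, s) * S.lam (p, t))"
    by (intro sum_nonneg mult_nonneg_nonneg S.lam_nonneg)
  moreover have "L = 4 / real n" unfolding L_def by (rule sum_lam_marks[OF p])
  ultimately have "(\<Sum>s\<in>UNIV. 2 * S.lam (p, s) ^ 2) + (\<Sum>s\<in>UNIV. \<Sum>t\<in>UNIV - {s}. S.lam (p, s) * S.lam (p, t))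
      \<le> 32 / (real n)^2"
    by (simp add: sum_distrib_left[symmetric] power_divide)
  then show ?thesis
    using off_diagonal_moments_le[OF p]
    by (simp add: S.pair_moment_def sum.distrib)
qed

lemma adjacent_pair_terms_eq:
  assumes p: "p \<in> board r"
  shows "(\<Sum>s\<in>UNIV. \<Sum>q\<in>adjacent_pairs p. \<Sum>t\<in>UNIV. S.pair_moment (p, s) (q, t))
           = 32 * real (card (adjacent_pairs p)) / (real n)^2"
proof -
  have q_board: "q \<in> board r" if "q \<in> adjacent_pairs p" for q
    using that by (simp add: adjacent_pairs_def)
  have "(\<Sum>s\<in>UNIV. \<Sum>q\<in>adjacent_pairs p. \<Sum>t\<in>UNIV. S.lam (p, s) * S.lam (q, t))
      = (\<Sum>s\<in>UNIV. S.lam (p, s) * (\<Sum>q\<in>adjacent_pairs p. \<Sum>t\<in>UNIV. S.lam (q, t)))"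
    by (simp add: sum_distrib_left)
  also have "\<dots> = (\<Sum>s\<in>UNIV. S.lam (p, s)) * (\<Sum>q\<in>adjacent_pairs p. \<Sum>t\<in>UNIV. S.lam (q, t))"
    by (rule sum_distrib_right[symmetric])
  also have "\<dots> = 16 * real (card (adjacent_pairs p)) / (real n)^2"
    using p by (simp add: sum_lam_marks q_board power2_eq_square)
  finally have lam_part: "(\<Sum>s\<in>UNIV. \<Sum>q\<in>adjacent_pairs p. \<Sum>t\<in>UNIV. S.lam (p, s) * S.lam (q, t))
      = 16 * real (card (adjacent_pairs p)) / (real n)^2" .
  have "(\<Sum>s\<in>UNIV. \<Sum>q\<in>adjacent_pairs p. \<Sum>t\<in>UNIV. S.E (\<lambda>w. real (coinc_field w (p, s)) * real (coinc_field w (q, t))))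
      = (\<Sum>q\<in>adjacent_pairs p. S.E (\<lambda>w. real (coinc_count (w (fst p)) (w (snd p))) * real (coinc_count (w (fst q)) (w (snd q)))))"
  proof (subst sum.swap, rule sum.cong[OF refl])
    fix q assume q: "q \<in> adjacent_pairs p"
    have "(\<Sum>s\<in>UNIV. \<Sum>t\<in>UNIV. S.E (\<lambda>w. real (coinc_field w (p, s)) * real (coinc_field w (q, t))))
        = S.E (\<lambda>w. (\<Sum>s\<in>UNIV. real (coinc w (p, s))) * (\<Sum>t\<in>UNIV. real (coinc w (q, t))))"
      using p q_board[OF q] by (simp add: coinc_field_board sum_product Bochner_Integration.integral_sum)
    then show "(\<Sum>s\<in>UNIV. \<Sum>t\<in>UNIV. S.E (\<lambda>w. real (coinc_field w (p, s)) * real (coinc_field w (q, t))))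
        = S.E (\<lambda>w. real (coinc_count (w (fst p)) (w (snd p))) * real (coinc_count (w (fst q)) (w (snd q))))"
      by (simp add: sum_coinc_marks[symmetric] case_prod_beta flip: of_nat_sum)
  qed
  also have "\<dots> = 16 * real (card (adjacent_pairs p)) / (real n)^2"
    using p by (simp add: expectation_coinc_count_adjacent)
  finally show ?thesis using lam_part by (simp add: S.pair_moment_def sum.distrib)
qed

theorem stein_bound_rook_le: "S.stein_bound (rook_index r) \<le> rook_bound n r"
proof (cases "r \<le> 1")
  case True
  then have "rook_index r = {}" "rook_bound n r = 0"
    by (auto simp: rook_index_def rook_bound_def le_Suc_eq)
  then show ?thesis by (simp add: S.stein_bound_def)
next
  case False
  define c where "c = 32 / (real n)^2 + 64 * (real r - 2) / (real n)^2 + 4 / (real n * (real n - 1))"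
  have "S.stein_bound (rook_index r) = (\<Sum>p\<in>board r. \<Sum>s\<in>UNIV. 2 * S.lam (p, s) ^ 2
      + (\<Sum>\<beta>\<in>rook_index r \<inter> shares_rook (p, s) - {(p, s)}. S.pair_moment (p, s) \<beta>))"
    unfolding S.stein_bound_def rook_index_eq by (simp add: sum.cartesian_product)
  also have "\<dots> \<le> (\<Sum>p\<in>board r. c)"
  proof (rule sum_mono)
    fix p assume p: "p \<in> board r"
    have "real (card (adjacent_pairs p)) \<le> 2 * (real r - 2)"
      using card_adjacent_pairs_le[OF p] False by simp
    then have "32 * real (card (adjacent_pairs p)) / (real n)^2 \<le> 64 * (real r - 2) / (real n)^2"
      by (simp add: divide_right_mono)
    then show "(\<Sum>s\<in>UNIV. 2 * S.lam (p, s) ^ 2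
        + (\<Sum>\<beta>\<in>rook_index r \<inter> shares_rook (p, s) - {(p, s)}. S.pair_moment (p, s) \<beta>)) \<le> c"
      unfolding stein_terms_split[OF p] adjacent_pair_terms_eq[OF p] c_def
      using same_pair_terms_le[OF p] by simp
  qed
  also have "\<dots> \<le> rook_bound n r"
    using rook_bound_ge[of r n] False r_less_n by (simp add: real_card_board c_def)
  finally show ?thesis .
qed

theorem dTV_coinc_field_le:
  "dTV (map_pmf coinc_field (rook_config n r))
     (Pi_pmf (rook_index r) 0 (\<lambda>\<alpha>. pois (measure_pmf.expectation (rook_config n r) (\<lambda>w. real (coinc w \<alpha>)))))
   \<le> rook_bound n r"
proof -
  have "Pi_pmf (rook_index r) 0 (\<lambda>\<alpha>. pois (measure_pmf.expectation P (\<lambda>w. real (coinc w \<alpha>))))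
      = S.poisson_field (rook_index r)"
    by (intro Pi_pmf_cong refl) (simp add: S.lam_def coinc_field_def)
  then show ?thesis
    using S.dTV_le_stein_bound stein_bound_rook_le by (simp add: rook_config_eq)
qed

end

theorem lemma3p2:
  fixes n k r :: nat
  assumes "2 \<le> n" and "1 \<le> k" and "k \<le> n" and "r = n - k"
  defines "P \<equiv> rook_config n r"
  defines "I \<equiv> rook_index r"
  defines "EXa \<equiv> (\<lambda>\<alpha>. measure_pmf.expectation P (\<lambda>w. real (coinc w \<alpha>)))"
  defines "LX \<equiv> map_pmf (\<lambda>w. \<lambda>\<alpha>. if \<alpha> \<in> I then coinc w \<alpha> else 0) P"
  defines "LY \<equiv> Pi_pmf I 0 (\<lambda>\<alpha>. pois (EXa \<alpha>))"
  defines "W \<equiv> (\<lambda>s w. \<Sum>\<alpha>\<in>rook_index_mark r s. coinc w \<alpha>)"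
  defines "EW \<equiv> (\<lambda>s. measure_pmf.expectation P (\<lambda>w. real (W s w)))"
  defines "LW \<equiv> map_pmf (\<lambda>w. (W RR w, W CC w, W RC w, W CR w)) P"
  defines "LS \<equiv> pair_pmf (pois (EW RR)) (pair_pmf (pois (EW CC)) (pair_pmf (pois (EW RC)) (pois (EW CR))))"
  shows "dTV LX LY \<le> rook_bound n r \<and> dTV LW LS \<le> rook_bound n r"
proof -
  interpret rook_model n r using assms by unfold_locales auto
  let ?J = "rook_index_mark r"
  define \<Phi> where "\<Phi> y = (\<Sum>\<alpha>\<in>?J RR. y \<alpha>, \<Sum>\<alpha>\<in>?J CC. y \<alpha>, \<Sum>\<alpha>\<in>?J RC. y \<alpha>, \<Sum>\<alpha>\<in>?J CR. y \<alpha>)"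
    for y :: "(nat \<times> nat) \<times> mark \<Rightarrow> nat"
  have J: "finite (?J s)" "?J s \<subseteq> I" for s
    using finite_rook_index unfolding I_def rook_index_mark_def by auto
  have LX: "LX = map_pmf coinc_field P"
    unfolding LX_def I_def coinc_field_def ..
  have "dTV LX LY \<le> rook_bound n r"
    using dTV_coinc_field_le unfolding LX LY_def EXa_def P_def I_def .
  moreover have "LW = map_pmf \<Phi> LX"
    using J(2) by (auto simp: LW_def LX_def W_def \<Phi>_def map_pmf_comp subset_iff intro!: map_pmf_cong sum.cong)
  moreover have "LS = map_pmf \<Phi> LY"
  proof -
    have "EW s = (\<Sum>\<alpha>\<in>?J s. EXa \<alpha>)" for s
      using J(1) coinc_le_1
      by (simp add: EW_def W_def EXa_def Bochner_Integration.integral_sum integrable_pmf_bounded[where C=1])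
    moreover have "0 \<le> EXa \<alpha>" for \<alpha>
      unfolding EXa_def by (rule Bochner_Integration.integral_nonneg) simp
    ultimately show ?thesis
      unfolding LS_def LY_def \<Phi>_def I_def UN_rook_index_mark[symmetric]
      by (simp add: Pi_pmf_pois_mark_sums J(1) rook_index_mark_disjoint)
  qed
  ultimately show ?thesis using dTV_map_pmf_le[of \<Phi> LX LY] by simp
qed

end
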